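(* Let $X$ be the unique strong solution of the CDGARCH variance equation with initial condition $\Phi$. Then $X$ satisfies the stochastic Volterra integral equation $$X_t=X_0+\int_0^t(\eta-c_\mu X_s)\,ds+c_\nu\int_{0+}^tX_{s-}\,dS_s+\Xi(X)_t,\quad t\ge0,$$ where $\Xi(X)_t=\int_{[-p,t]}F_\mu(t,s)X_s\,ds+\int_{(-q,t]}F_\nu(t,s)X_{s-}\,dS_s$, and equivalently the stochastic functional differential equation $$dX_t=\big(\eta-c_\mu X_t+\xi(X)_t\big)\,dt+c_\nu X_{t-}\,dS_t,\quad t\ge 0,$$ with $X_u=\Phi_u$ on $[-r,0]$, where $\xi(X)_t=\int_{-p}^0 f_\mu(u)X_{t+u}\,du+\int_{-q+}^0 f_\nu(u)X_{t+u-}\,dS_{t+u}$. In particular, $X$ is a semimartingale with paths of finite variation on compacts.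
   Context: Let $p,q\ge 0$, $r:=p\vee q>0$, and $(\Omega,\mathcal F,\mathbb F=(\mathcal F_t)_{t\ge -r},\mathbb P)$ a filtered probability space with the usual conditions, supporting a càdlàg adapted centered square-integrable Lévy process $(L_t)_{t\ge -r}$, $L_{-r}=0$, with increments $L_t-L_s$ independent of $\mathcal F_s$ and stationary; $S=[L,L]$, $S_t=\sigma_L^2(t+r)+\sum_{-r<s\le t}(\Delta L_s)^2$. Assume $\mathbb E[L_1^4]<\infty$. Parameters: $\eta>0$, $c_\mu,c_\nu>0$, $f_\mu,f_\nu$ nonnegative continuous, supported on $[-p,0]$, $[-q,0]$; $\mu(E)=\int_{E\cap[-p,0]}f_\mu-c_\mu\delta_0(E)$, $\nu(E)=\int_{E\cap[-q,0]}f_\nu+c_\nu\delta_0(E)$. Kernels: $F_\mu(t,s)=\int_{[-p\vee(s-t),s\wedge0]}f_\mu(u)du$, $F_\nu(t,s)=\int_{[-q\vee(s-t),s\wedge0]}f_\nu(u)du$ (zero if the interval is empty). The initial process $\Phi$ is càdlàg on $[-r,0]$, adapted to the natural filtration of $L$, with $\mathbb E[\sup_{[-r,0]}|\Phi|^2]<\infty$; extend $\Phi_t=\Phi_0$ for $t>0$, $\theta_t=\Phi_t+\eta t\mathbf 1_{[0,\infty)}(t)$. CDGARCH variance equation: $X_t=\theta_t+\int_{-p}^0\int_u^{t+u}X_s\,ds\,\mu(du)+\int_{-q}^0\int_{u+}^{t+u}X_{s-}\,dS_s\,\nu(du)$, $t\ge0$, $X=\Phi$ on $[-r,0]$. Strong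 solution: adapted càdlàg $X$ with $\mathbb E[\sup_{s\in[-r,t]}|X_s|^2]<\infty$ for all $t$, $X=\Phi$ on $[-r,0]$, satisfying the equation for $t>0$. *)

theory Defs
  imports "HOL-Probability.Probability"
begin

definition lim_left :: "(real \<Rightarrow> real) \<Rightarrow> real \<Rightarrow> real" where
  "lim_left f t = Lim (at_left t) f"

definition cadlag_from :: "real \<Rightarrow> (real \<Rightarrow> real) \<Rightarrow> bool" where
  "cadlag_from a f \<longleftrightarrow>
     (\<forall>t\<ge>a. continuous (at_right t) f) \<and> (\<forall>t>a. \<exists>l. (f \<longlongrightarrow> l) (at_left t))"

definition cadlag_on :: "real \<Rightarrow> real \<Rightarrow> (real \<Rightarrow> real) \<Rightarrow> bool" where
  "cadlag_on a b f \<longleftrightarrow>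
     (\<forall>t\<in>{a..<b}. continuous (at_right t) f) \<and>
     (\<forall>t\<in>{a<..b}. \<exists>l. (f \<longlongrightarrow> l) (at_left t))"

definition bounded_variation_on :: "(real \<Rightarrow> real) \<Rightarrow> real \<Rightarrow> real \<Rightarrow> bool" where
  "bounded_variation_on f a b \<longleftrightarrow>
     (\<exists>B. \<forall>ts. sorted ts \<and> set ts \<subseteq> {a..b} \<longrightarrow>
              (\<Sum>i<length ts - 1. \<bar>f (ts ! Suc i) - f (ts ! i)\<bar>) \<le> B)"

definition filtration_usual :: "'a measure \<Rightarrow> real \<Rightarrow> (real \<Rightarrow> 'a measure) \<Rightarrow> bool" where
  "filtration_usual M a F \<longleftrightarrow>
     (\<forall>t\<ge>a. subalgebra M (F t)) \<and>
     (\<forall>s t. a \<le> s \<longrightarrow> s \<le> t \<longrightarrow> sets (F s) \<subseteq> sets (F t)) \<and>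
     (\<forall>t\<ge>a. sets (F t) = (\<Inter>u\<in>{t<..}. sets (F u))) \<and>
     (\<forall>A\<in>null_sets M. \<forall>N. N \<subseteq> A \<longrightarrow> N \<in> sets (F a))"

definition adapted :: "(real \<Rightarrow> 'a measure) \<Rightarrow> real \<Rightarrow> (real \<Rightarrow> 'a \<Rightarrow> real) \<Rightarrow> bool" where
  "adapted F a X \<longleftrightarrow> (\<forall>t\<ge>a. X t \<in> borel_measurable (F t))"

definition natural_filtration :: "'a measure \<Rightarrow> real \<Rightarrow> (real \<Rightarrow> 'a \<Rightarrow> real) \<Rightarrow> real \<Rightarrow> 'a measure" where
  "natural_filtration M a L t = sigma (space M)
     ({{\<omega>\<in>space M. L s \<omega> \<in> B} | s B. s \<in> {a..t} \<and> B \<in> sets borel} \<union> null_sets M)"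

definition levy_process :: "'a measure \<Rightarrow> (real \<Rightarrow> 'a measure) \<Rightarrow> real \<Rightarrow> (real \<Rightarrow> 'a \<Rightarrow> real) \<Rightarrow> bool" where
  "levy_process M F a L \<longleftrightarrow>
     adapted F a L \<and>
     (\<forall>\<omega>\<in>space M. L a \<omega> = 0 \<and> cadlag_from a (\<lambda>t. L t \<omega>)) \<and>
     (\<forall>s t. a \<le> s \<longrightarrow> s \<le> t \<longrightarrow>
        (\<forall>A\<in>sets (F s). \<forall>B\<in>sets borel.
           measure M ({\<omega>\<in>space M. L t \<omega> - L s \<omega> \<in> B} \<inter> A)
             = measure M {\<omega>\<in>space M. L t \<omega> - L s \<omega> \<in> B} * measure M A)) \<and>
     (\<forall>s t. a \<le> s \<longrightarrow> s \<le> t \<longrightarrow>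
        distr M borel (\<lambda>\<omega>. L t \<omega> - L s \<omega>) = distr M borel (L (a + (t - s))))"

definition centered_square_integrable :: "'a measure \<Rightarrow> real \<Rightarrow> (real \<Rightarrow> 'a \<Rightarrow> real) \<Rightarrow> bool" where
  "centered_square_integrable M a L \<longleftrightarrow>
     (\<forall>t\<ge>a. integrable M (L t) \<and> integrable M (\<lambda>\<omega>. (L t \<omega>)\<^sup>2) \<and> integral\<^sup>L M (L t) = 0)"

text \<open>(sigma^2, nu) is the Gaussian variance / Levy measure of the (centered, square-integrable)
  Levy process L via the Levy--Khintchine formula for the unit increment L(a+1) - L(a) = L(a+1).\<close>
definition levy_khintchine :: "'a measure \<Rightarrow> real \<Rightarrow> (real \<Rightarrow> 'a \<Rightarrow> real) \<Rightarrow> real \<Rightarrow> real measure \<Rightarrow> bool" where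
  "levy_khintchine M a L \<sigma> \<nu> \<longleftrightarrow>
     \<sigma> \<ge> 0 \<and> sets \<nu> = sets borel \<and> emeasure \<nu> {0} = 0 \<and> integrable \<nu> (\<lambda>x. x\<^sup>2) \<and>
     (\<forall>u::real. (CLINT \<omega>|M. cis (u * L (a + 1) \<omega>))
        = exp (complex_of_real (- (\<sigma>\<^sup>2 * u\<^sup>2 / 2))
               + (CLINT x|\<nu>. cis (u * x) - 1 - \<i> * complex_of_real (u * x))))"

definition qv_path :: "real \<Rightarrow> real \<Rightarrow> (real \<Rightarrow> real) \<Rightarrow> real \<Rightarrow> real" where
  "qv_path \<sigma> a l t = \<sigma>\<^sup>2 * (t - a) + infsum (\<lambda>s. (l s - lim_left l s)\<^sup>2) {a<..t}"

definition dS :: "real \<Rightarrow> real \<Rightarrow> (real \<Rightarrow> real) \<Rightarrow> real measure" where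
  "dS \<sigma> a l = interval_measure (\<lambda>t. qv_path \<sigma> a l (max t a))"

definition Fker :: "(real \<Rightarrow> real) \<Rightarrow> real \<Rightarrow> real \<Rightarrow> real \<Rightarrow> real" where
  "Fker f p t s = (LBINT u:{max (-p) (s - t)..min s 0}. f u)"

definition theta :: "real \<Rightarrow> (real \<Rightarrow> real) \<Rightarrow> real \<Rightarrow> real" where
  "theta \<eta> \<phi> t = \<phi> (min t 0) + \<eta> * max t 0"

text \<open>Pathwise CDGARCH variance equation at time t, with the signed measures
  mu = f_mu du - c_mu delta_0 and nu = f_nu du + c_nu delta_0 written out.\<close>
definition cdgarch_eq ::
  "real \<Rightarrow> real \<Rightarrow> real \<Rightarrow> real \<Rightarrow> real \<Rightarrow> (real \<Rightarrow> real) \<Rightarrow> (real \<Rightarrow> real) \<Rightarrow>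
   real measure \<Rightarrow> (real \<Rightarrow> real) \<Rightarrow> (real \<Rightarrow> real) \<Rightarrow> real \<Rightarrow> bool" where
  "cdgarch_eq p q \<eta> c\<^sub>\<mu> c\<^sub>\<nu> f\<^sub>\<mu> f\<^sub>\<nu> SM \<phi> x t \<longleftrightarrow>
     x t = theta \<eta> \<phi> t
       + ((LBINT u:{-p..0}. f\<^sub>\<mu> u * (LBINT s:{u..t+u}. x s)) - c\<^sub>\<mu> * (LBINT s:{0..t}. x s))
       + ((LBINT u:{-q..0}. f\<^sub>\<nu> u * (LINT s:{u<..t+u}|SM. lim_left x s))
          + c\<^sub>\<nu> * (LINT s:{0<..t}|SM. lim_left x s))"

definition strong_solution ::
  "'a measure \<Rightarrow> (real \<Rightarrow> 'a measure) \<Rightarrow> real \<Rightarrow> real \<Rightarrow> real \<Rightarrow> real \<Rightarrow> real \<Rightarrow> real \<Rightarrow>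
   (real \<Rightarrow> real) \<Rightarrow> (real \<Rightarrow> real) \<Rightarrow> real \<Rightarrow> (real \<Rightarrow> 'a \<Rightarrow> real) \<Rightarrow>
   (real \<Rightarrow> 'a \<Rightarrow> real) \<Rightarrow> (real \<Rightarrow> 'a \<Rightarrow> real) \<Rightarrow> bool" where
  "strong_solution M F r p q \<eta> c\<^sub>\<mu> c\<^sub>\<nu> f\<^sub>\<mu> f\<^sub>\<nu> \<sigma> L \<Phi> X \<longleftrightarrow>
     adapted F (-r) X \<and>
     (\<forall>\<omega>\<in>space M. cadlag_from (-r) (\<lambda>t. X t \<omega>)) \<and>
     (\<forall>t. (\<integral>\<^sup>+\<omega>. (SUP s\<in>{-r..t}. ennreal ((X s \<omega>)\<^sup>2)) \<partial>M) < \<infinity>) \<and>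
     (\<forall>\<omega>\<in>space M. \<forall>t\<in>{-r..0}. X t \<omega> = \<Phi> t \<omega>) \<and>
     (AE \<omega> in M. \<forall>t>0. cdgarch_eq p q \<eta> c\<^sub>\<mu> c\<^sub>\<nu> f\<^sub>\<mu> f\<^sub>\<nu>
                         (dS \<sigma> (-r) (\<lambda>s. L s \<omega>)) (\<lambda>s. \<Phi> s \<omega>) (\<lambda>s. X s \<omega>) t)"

definition martingale_from :: "'a measure \<Rightarrow> (real \<Rightarrow> 'a measure) \<Rightarrow> real \<Rightarrow> (real \<Rightarrow> 'a \<Rightarrow> real) \<Rightarrow> bool" where
  "martingale_from M F a X \<longleftrightarrow>
     adapted F a X \<and> (\<forall>t\<ge>a. integrable M (X t)) \<and>
     (\<forall>s t. a \<le> s \<longrightarrow> s \<le> t \<longrightarrow>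
        (\<forall>A\<in>sets (F s). (LINT \<omega>:A|M. X t \<omega>) = (LINT \<omega>:A|M. X s \<omega>)))"

definition stopping_time_from :: "(real \<Rightarrow> 'a measure) \<Rightarrow> real \<Rightarrow> 'a set \<Rightarrow> ('a \<Rightarrow> ereal) \<Rightarrow> bool" where
  "stopping_time_from F a \<Omega> \<tau> \<longleftrightarrow>
     (\<forall>\<omega>\<in>\<Omega>. ereal a \<le> \<tau> \<omega>) \<and> (\<forall>t\<ge>a. {\<omega>\<in>\<Omega>. \<tau> \<omega> \<le> ereal t} \<in> sets (F t))"

definition local_martingale_from :: "'a measure \<Rightarrow> (real \<Rightarrow> 'a measure) \<Rightarrow> real \<Rightarrow> (real \<Rightarrow> 'a \<Rightarrow> real) \<Rightarrow> bool" where
  "local_martingale_from M F a X \<longleftrightarrow>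
     adapted F a X \<and> (\<forall>\<omega>\<in>space M. cadlag_from a (\<lambda>t. X t \<omega>)) \<and>
     (\<exists>\<tau>::nat \<Rightarrow> 'a \<Rightarrow> ereal.
        (\<forall>n. stopping_time_from F a (space M) (\<tau> n)) \<and>
        (\<forall>n. \<forall>\<omega>\<in>space M. \<tau> n \<omega> \<le> \<tau> (Suc n) \<omega>) \<and>
        (AE \<omega> in M. (\<lambda>n. \<tau> n \<omega>) \<longlonglongrightarrow> \<infinity>) \<and>
        (\<forall>n. martingale_from M F a (\<lambda>t \<omega>. X (real_of_ereal (min (ereal t) (\<tau> n \<omega>))) \<omega>)))"

definition fv_process :: "'a measure \<Rightarrow> (real \<Rightarrow> 'a measure) \<Rightarrow> real \<Rightarrow> (real \<Rightarrow> 'a \<Rightarrow> real) \<Rightarrow> bool" where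
  "fv_process M F a A \<longleftrightarrow>
     adapted F a A \<and> (\<forall>\<omega>\<in>space M. cadlag_from a (\<lambda>t. A t \<omega>)) \<and>
     (AE \<omega> in M. \<forall>T\<ge>a. bounded_variation_on (\<lambda>t. A t \<omega>) a T)"

definition semimartingale_from :: "'a measure \<Rightarrow> (real \<Rightarrow> 'a measure) \<Rightarrow> real \<Rightarrow> (real \<Rightarrow> 'a \<Rightarrow> real) \<Rightarrow> bool" where
  "semimartingale_from M F a X \<longleftrightarrow>
     adapted F a X \<and> (\<forall>\<omega>\<in>space M. cadlag_from a (\<lambda>t. X t \<omega>)) \<and>
     (\<exists>Mt A. local_martingale_from M F a Mt \<and> (\<forall>\<omega>\<in>space M. Mt a \<omega> = 0) \<and>
            fv_process M F a A \<and> (\<forall>\<omega>\<in>space M. A a \<omega> = 0) \<and>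
            (AE \<omega> in M. \<forall>t\<ge>a. X t \<omega> = X a \<omega> + Mt t \<omega> + A t \<omega>))"

end

theory Submission
  imports Defs
begin

(*
  Outside a null set the variance equation is a deterministic equation for the cadlag path
  x = X(omega), in which dS(omega) is a measure that is finite on bounded intervals. Being cadlag,
  x and its left limits are bounded on compacts, so Fubini's theorem may be used to exchange the
  delay integrals against mu and nu with the time integrals. Exchanged one way, the delay terms
  become integrals against the kernels F_mu(t, .) and F_nu(t, .), giving the Volterra equation;
  exchanged the other way, they become time integrals of the moving averages xi, giving the
  functional differential equation. In the Volterra form every term is either linear in t or an
  integral of a bounded function against a kernel that is nonnegative and increasing in t; the
  increments of such a term are dominated by those of an increasing function, so x has finite
  variation on compacts. An adapted cadlag process of finite variation is a semimartingale, with
  vanishing local martingale part.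
*)

section \<open>Cadlag paths\<close>

lemma lim_left_eq:
  assumes "(x \<longlongrightarrow> l) (at_left (s::real))"
  shows "lim_left x s = l"
  unfolding lim_left_def using assms by (intro tendsto_Lim) (simp_all add: trivial_limit_at_left_real)

lemma cadlag_from_tendsto_lim_left:
  assumes "cadlag_from a x" "s > a"
  shows "(x \<longlongrightarrow> lim_left x s) (at_left s)"
proof -
  obtain l where "(x \<longlongrightarrow> l) (at_left s)" using assms unfolding cadlag_from_def by blast
  with lim_left_eq show ?thesis by metis
qed

lemma cadlag_from_mono:
  assumes "a \<le> b" "cadlag_from a f"
  shows "cadlag_from b f"
  using assms unfolding cadlag_from_def by auto

lemma cadlag_from_right_sequentially:
  fixes x :: "real \<Rightarrow> real"
  assumes "cadlag_from a x" "a \<le> s" "\<And>n. c n \<ge> s" "c \<longlonglongrightarrow> s"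
  shows "(\<lambda>n. x (c n)) \<longlonglongrightarrow> x s"
proof -
  have "continuous (at s within {s..}) x"
    using assms(1,2) unfolding cadlag_from_def at_within_Ici_at_right by blast
  then show ?thesis by (rule continuous_within_tendsto_compose') (use assms(3,4) in auto)
qed

lemma ceiling_divide_bounds:
  fixes x m :: real
  assumes m: "0 < m"
  shows "x \<le> of_int \<lceil>x * m\<rceil> / m" "of_int \<lceil>x * m\<rceil> / m \<le> x + 1 / m"
proof -
  have "x * m \<le> of_int \<lceil>x * m\<rceil>" "of_int \<lceil>x * m\<rceil> \<le> x * m + 1"
    using ceiling_correct[of "x * m"] by linarith+
  then show "x \<le> of_int \<lceil>x * m\<rceil> / m" "of_int \<lceil>x * m\<rceil> / m \<le> x + 1 / m"
    using m by (simp_all add: pos_le_divide_eq pos_divide_le_eq distrib_right)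
qed

lemma borel_measurable_cadlag_from:
  fixes x :: "real \<Rightarrow> real"
  assumes cad: "cadlag_from a x"
  shows "(\<lambda>s. indicator {a..} s * x s) \<in> borel_measurable borel"
proof (rule borel_measurable_LIMSEQ_real)
  define c where "c n s = a + real_of_int \<lceil>(s - a) * real (Suc n)\<rceil> / real (Suc n)" for n s
  show "(\<lambda>s. indicator {a..} s * x (c n s)) \<in> borel_measurable borel" for n
  proof -
    have "(\<lambda>s. (\<lambda>k s. indicator {a..} s * x (a + real_of_int k / real (Suc n)))
             \<lceil>(s - a) * real (Suc n)\<rceil> s) \<in> borel_measurable borel"
      by (rule measurable_compose_countable) measurable
    then show ?thesis by (simp add: c_def)
  qed
  fix s :: real
  show "(\<lambda>n. indicator {a..} s * x (c n s)) \<longlonglongrightarrow> indicator {a..} s * x s"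
  proof (cases "a \<le> s")
    case True
    have bounds: "s \<le> c n s" "c n s \<le> s + 1 / real (Suc n)" for n
      using ceiling_divide_bounds[of "real (Suc n)" "s - a"] by (simp_all add: c_def)
    have lim: "(\<lambda>n. s + 1 / real (Suc n)) \<longlonglongrightarrow> s + 0"
      by (rule tendsto_add[OF tendsto_const LIMSEQ_Suc[OF lim_1_over_n]])
    have "(\<lambda>n. c n s) \<longlonglongrightarrow> s"
    proof (rule real_tendsto_sandwich)
      show "\<forall>\<^sub>F n in sequentially. s \<le> c n s" using bounds by simp
      show "\<forall>\<^sub>F n in sequentially. c n s \<le> s + 1 / real (Suc n)" using bounds by simp
      show "(\<lambda>n. s + 1 / real (Suc n)) \<longlonglongrightarrow> s" using lim by simp
    qed (rule tendsto_const)
    then have "(\<lambda>n. x (c n s)) \<longlonglongrightarrow> x s"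
      by (rule cadlag_from_right_sequentially[OF cad True bounds(1)])
    moreover have "indicator {a..} s = (1::real)" using True by simp
    ultimately show ?thesis by (simp only: mult_1)
  qed simp
qed

lemma borel_measurable_cadlag_from_lim_left:
  fixes x :: "real \<Rightarrow> real"
  assumes cad: "cadlag_from a x"
  shows "(\<lambda>s. indicator {a<..} s * lim_left x s) \<in> borel_measurable borel"
proof (rule borel_measurable_LIMSEQ_real)
  define c where "c n s = s - 1 / real (Suc n)" for n s
  have x_meas: "(\<lambda>s. indicator {a..} s * x s) \<in> borel_measurable borel"
    by (rule borel_measurable_cadlag_from[OF cad])
  show "(\<lambda>s. indicator {a<..} s * (indicator {a..} (c n s) * x (c n s))) \<in> borel_measurable borel" for n
    using measurable_compose[OF _ x_meas, of "\<lambda>s. c n s" borel] unfolding c_def by measurable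
  fix s :: real
  show "(\<lambda>n. indicator {a<..} s * (indicator {a..} (c n s) * x (c n s))) \<longlonglongrightarrow> indicator {a<..} s * lim_left x s"
  proof (cases "a < s")
    case True
    have "(\<lambda>n. c n s) \<longlonglongrightarrow> s - 0"
      unfolding c_def by (rule tendsto_diff[OF tendsto_const LIMSEQ_Suc[OF lim_1_over_n]])
    then have "filterlim (\<lambda>n. c n s) (at_left s) sequentially"
      by (intro tendsto_imp_filterlim_at_left) (simp_all add: c_def)
    then have "(\<lambda>n. x (c n s)) \<longlonglongrightarrow> lim_left x s"
      by (rule filterlim_compose[OF cadlag_from_tendsto_lim_left[OF cad True]])
    moreover have "eventually (\<lambda>n. a \<le> c n s) sequentially"
      using \<open>(\<lambda>n. c n s) \<longlonglongrightarrow> s - 0\<close> True by (intro order_tendstoD(1)[THEN eventually_mono]) auto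
    ultimately show ?thesis
      using True by (auto elim!: tendsto_cong[THEN iffD1, rotated] eventually_mono)
  qed simp
qed

lemma cadlag_from_locally_bounded:
  fixes x :: "real \<Rightarrow> real"
  assumes cad: "cadlag_from a x" and t: "a \<le> t"
  shows "\<exists>d>0. \<exists>K. \<forall>s. a \<le> s \<and> dist s t < d \<longrightarrow> \<bar>x s\<bar> \<le> K"
proof -
  define K where "K = \<bar>x t\<bar> + \<bar>lim_left x t\<bar> + 1"
  have bounded_near: "eventually (\<lambda>y. \<bar>x y\<bar> \<le> K) F" if "(x \<longlongrightarrow> l) F" "\<bar>l\<bar> + 1 \<le> K" for F l
  proof -
    have "eventually (\<lambda>y. dist (x y) l < 1) F" using that(1) by (simp add: tendsto_iff)
    then show ?thesis by eventually_elim (use that(2) in \<open>auto simp: dist_real_def\<close>)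
  qed
  have right: "eventually (\<lambda>y. \<bar>x y\<bar> \<le> K) (at_right t)"
    using cad t by (intro bounded_near[where l="x t"]) (auto simp: cadlag_from_def continuous_within K_def)
  have "eventually (\<lambda>y. \<bar>x y\<bar> \<le> K) (at t within {a..})"
  proof (cases "t = a")
    case True
    then show ?thesis using right by (simp add: at_within_Ici_at_right)
  next
    case False
    then have "eventually (\<lambda>y. \<bar>x y\<bar> \<le> K) (at_left t)"
      using t by (intro bounded_near[OF cadlag_from_tendsto_lim_left[OF cad]]) (auto simp: K_def)
    with right have "eventually (\<lambda>y. \<bar>x y\<bar> \<le> K) (at t)"
      by (simp add: eventually_at_split)
    then show ?thesis by (rule filter_leD[OF at_le, rotated]) simp
  qed
  then obtain d where "d > 0" "\<forall>s\<in>{a..}. s \<noteq> t \<and> dist s t < d \<longrightarrow> \<bar>x s\<bar> \<le> K"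
    unfolding eventually_at by blast
  moreover have "\<bar>x t\<bar> \<le> K" by (simp add: K_def)
  ultimately show ?thesis by (metis atLeast_iff)
qed

lemma cadlag_from_bounded:
  fixes x :: "real \<Rightarrow> real"
  assumes cad: "cadlag_from a x"
  shows "\<exists>K. \<forall>s\<in>{a..b}. \<bar>x s\<bar> \<le> K"
proof -
  have "\<forall>t\<in>{a..b}. \<exists>d>0. \<exists>K. \<forall>s. a \<le> s \<and> dist s t < d \<longrightarrow> \<bar>x s\<bar> \<le> K"
    using cadlag_from_locally_bounded[OF cad] by simp
  then obtain d where "\<And>t. t \<in> {a..b} \<Longrightarrow> d t > 0 \<and> (\<exists>K. \<forall>s. a \<le> s \<and> dist s t < d t \<longrightarrow> \<bar>x s\<bar> \<le> K)"
    by metis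
  then obtain K where dK: "\<And>t. t \<in> {a..b} \<Longrightarrow> d t > 0 \<and> (\<forall>s. a \<le> s \<and> dist s t < d t \<longrightarrow> \<bar>x s\<bar> \<le> K t)"
    by metis
  obtain C where C: "C \<subseteq> {a..b}" "finite C" "{a..b} \<subseteq> (\<Union>c\<in>C. ball c (d c))"
    by (rule compactE_image[of "{a..b}" "{a..b}" "\<lambda>c. ball c (d c)"])
       (use dK in \<open>auto simp: dist_commute\<close>)
  have "\<bar>x s\<bar> \<le> (\<Sum>c\<in>C. \<bar>K c\<bar>)" if s: "s \<in> {a..b}" for s
  proof -
    obtain c where c: "c \<in> C" "s \<in> ball c (d c)" using C s by auto
    then have "\<bar>x s\<bar> \<le> \<bar>K c\<bar>" using dK[of c] C s by (force simp: dist_commute)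
    also have "\<dots> \<le> (\<Sum>c\<in>C. \<bar>K c\<bar>)" using C c by (intro member_le_sum) auto
    finally show ?thesis .
  qed
  then show ?thesis by blast
qed

lemma cadlag_from_lim_left_bounded:
  fixes x :: "real \<Rightarrow> real"
  assumes cad: "cadlag_from a x" and K: "\<forall>s\<in>{a..b}. \<bar>x s\<bar> \<le> K" and s: "s \<in> {a<..b}"
  shows "\<bar>lim_left x s\<bar> \<le> K"
proof -
  have "((\<lambda>y. \<bar>x y\<bar>) \<longlongrightarrow> \<bar>lim_left x s\<bar>) (at_left s)"
    using cadlag_from_tendsto_lim_left[OF cad] s by (intro tendsto_rabs) auto
  moreover have "eventually (\<lambda>y. \<bar>x y\<bar> \<le> K) (at_left s)"
    using s K by (intro eventually_mono[OF eventually_at_left_real[of a s]]) auto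
  ultimately show ?thesis
    by (rule tendsto_upperbound) (simp add: trivial_limit_at_left_real)
qed

section \<open>Functions of bounded variation\<close>

lemma bounded_variation_on_dominated:
  fixes f H :: "real \<Rightarrow> real"
  assumes ab: "a \<le> b" and dom: "\<And>s t. a \<le> s \<Longrightarrow> s \<le> t \<Longrightarrow> t \<le> b \<Longrightarrow> \<bar>f t - f s\<bar> \<le> H t - H s"
  shows "bounded_variation_on f a b"
  unfolding bounded_variation_on_def
proof (intro exI allI impI)
  fix ts :: "real list" assume ts: "sorted ts \<and> set ts \<subseteq> {a..b}"
  let ?n = "length ts"
  have B0: "0 \<le> H b - H a" using dom[of a b] ab by force
  show "(\<Sum>i<?n - 1. \<bar>f (ts ! Suc i) - f (ts ! i)\<bar>) \<le> H b - H a"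
  proof (cases "?n = 0")
    case True then show ?thesis using B0 by simp
  next
    case False
    have mem: "i < ?n \<Longrightarrow> ts ! i \<in> {a..b}" for i using ts nth_mem by blast
    have mono: "i < ?n - 1 \<Longrightarrow> ts ! i \<le> ts ! Suc i" for i
      using ts by (auto intro: sorted_nth_mono)
    have "(\<Sum>i<?n - 1. \<bar>f (ts ! Suc i) - f (ts ! i)\<bar>) \<le> (\<Sum>i<?n - 1. H (ts ! Suc i) - H (ts ! i))"
    proof (rule sum_mono)
      fix i assume "i \<in> {..<?n - 1}"
      then have "i < ?n - 1" by simp
      then show "\<bar>f (ts ! Suc i) - f (ts ! i)\<bar> \<le> H (ts ! Suc i) - H (ts ! i)"
        using dom[of "ts ! i" "ts ! Suc i"] mem[of i] mem[of "Suc i"] mono[of i] by auto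
    qed
    also have "\<dots> = H (ts ! (?n - 1)) - H (ts ! 0)"
      using sum_lessThan_telescope[of "\<lambda>i. H (ts ! i)" "?n - 1"] by simp
    also have "\<dots> \<le> H b - H a"
    proof -
      have "ts ! (?n - 1) \<in> {a..b}" "ts ! 0 \<in> {a..b}" using mem False by auto
      moreover have "ts ! 0 \<le> ts ! (?n - 1)" using ts False by (auto intro: sorted_nth_mono)
      ultimately show ?thesis
        using dom[of "ts ! (?n - 1)" b] dom[of a "ts ! 0"] by force
    qed
    finally show ?thesis .
  qed
qed

lemma bounded_variation_on_mono:
  assumes "a \<le> b" "mono_on {a..b} f"
  shows "bounded_variation_on f a b"
proof (rule bounded_variation_on_dominated[OF assms(1)])
  fix s t assume "a \<le> s" "s \<le> t" "t \<le> b"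
  then have "f s \<le> f t" using mono_onD[OF assms(2), of s t] by simp
  then show "\<bar>f t - f s\<bar> \<le> f t - f s" by simp
qed

lemma bounded_variation_on_add:
  assumes "bounded_variation_on f a b" "bounded_variation_on g a b"
  shows "bounded_variation_on (\<lambda>t. f t + g t) a b"
proof -
  obtain B where
    B: "\<And>ts. sorted ts \<and> set ts \<subseteq> {a..b} \<Longrightarrow> (\<Sum>i<length ts - 1. \<bar>f (ts ! Suc i) - f (ts ! i)\<bar>) \<le> B"
    using assms(1) unfolding bounded_variation_on_def by blast
  obtain C where
    C: "\<And>ts. sorted ts \<and> set ts \<subseteq> {a..b} \<Longrightarrow> (\<Sum>i<length ts - 1. \<bar>g (ts ! Suc i) - g (ts ! i)\<bar>) \<le> C"
    using assms(2) unfolding bounded_variation_on_def by blast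
  have "(\<Sum>i<length ts - 1. \<bar>(f (ts ! Suc i) + g (ts ! Suc i)) - (f (ts ! i) + g (ts ! i))\<bar>) \<le> B + C"
    if "sorted ts \<and> set ts \<subseteq> {a..b}" for ts
  proof -
    have "(\<Sum>i<length ts - 1. \<bar>(f (ts ! Suc i) + g (ts ! Suc i)) - (f (ts ! i) + g (ts ! i))\<bar>)
        \<le> (\<Sum>i<length ts - 1. \<bar>f (ts ! Suc i) - f (ts ! i)\<bar> + \<bar>g (ts ! Suc i) - g (ts ! i)\<bar>)"
      by (rule sum_mono) (simp add: abs_diff_triangle_ineq)
    also have "\<dots> \<le> B + C" using B[OF that] C[OF that] by (simp add: sum.distrib)
    finally show ?thesis .
  qed
  then show ?thesis unfolding bounded_variation_on_def by blast
qed

lemma bounded_variation_on_cmult: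
  assumes "bounded_variation_on f a b"
  shows "bounded_variation_on (\<lambda>t. c * f t) a b"
proof -
  obtain B where
    B: "\<And>ts. sorted ts \<and> set ts \<subseteq> {a..b} \<Longrightarrow> (\<Sum>i<length ts - 1. \<bar>f (ts ! Suc i) - f (ts ! i)\<bar>) \<le> B"
    using assms unfolding bounded_variation_on_def by blast
  have "(\<Sum>i<length ts - 1. \<bar>c * f (ts ! Suc i) - c * f (ts ! i)\<bar>) \<le> \<bar>c\<bar> * B"
    if "sorted ts \<and> set ts \<subseteq> {a..b}" for ts
  proof -
    have "\<bar>c * u - c * v\<bar> = \<bar>c\<bar> * \<bar>u - v\<bar>" for u v :: real
      by (simp add: abs_mult[symmetric] right_diff_distrib)
    then show ?thesis
      using mult_left_mono[OF B[OF that], of "\<bar>c\<bar>"] by (simp add: sum_distrib_left)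
  qed
  then show ?thesis unfolding bounded_variation_on_def by blast
qed

lemma bounded_variation_on_cong:
  assumes eq: "\<And>t. t \<in> {a..b} \<Longrightarrow> f t = g t" and g: "bounded_variation_on g a b"
  shows "bounded_variation_on f a b"
proof -
  obtain B where
    B: "\<And>ts. sorted ts \<and> set ts \<subseteq> {a..b} \<Longrightarrow> (\<Sum>i<length ts - 1. \<bar>g (ts ! Suc i) - g (ts ! i)\<bar>) \<le> B"
    using g unfolding bounded_variation_on_def by blast
  have "(\<Sum>i<length ts - 1. \<bar>f (ts ! Suc i) - f (ts ! i)\<bar>) = (\<Sum>i<length ts - 1. \<bar>g (ts ! Suc i) - g (ts ! i)\<bar>)"
    if "set ts \<subseteq> {a..b}" for ts
  proof (rule sum.cong)
    fix i assume "i \<in> {..<length ts - 1}"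
    then have "i < length ts" "Suc i < length ts" by auto
    then have "ts ! i \<in> {a..b}" "ts ! Suc i \<in> {a..b}" using that nth_mem by blast+
    then show "\<bar>f (ts ! Suc i) - f (ts ! i)\<bar> = \<bar>g (ts ! Suc i) - g (ts ! i)\<bar>" using eq by simp
  qed simp
  then show ?thesis using B unfolding bounded_variation_on_def by (metis (no_types))
qed

section \<open>Integration against measures that are finite on bounded intervals\<close>

lemma sigma_finite_measure_Ioc_finite:
  fixes N :: "real measure"
  assumes sets: "sets N = sets borel" and fin: "\<And>a b. emeasure N {a<..b} < \<infinity>"
  shows "sigma_finite_measure N"
proof
  have sp: "space N = UNIV" using sets_eq_imp_space_eq[OF sets] by simp
  show "\<exists>A. countable A \<and> A \<subseteq> sets N \<and> \<Union> A = space N \<and> (\<forall>a\<in>A. emeasure N a \<noteq> \<infinity>)"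
  proof (intro exI conjI)
    show "countable (range (\<lambda>n::nat. {-real n<..real n}))" by simp
    show "range (\<lambda>n::nat. {-real n<..real n}) \<subseteq> sets N" unfolding sets by (intro image_subsetI) simp
    show "\<Union> (range (\<lambda>n::nat. {-real n<..real n})) = space N"
    proof -
      have "\<exists>n::nat. z \<in> {-real n<..real n}" for z :: real
      proof -
        obtain n :: nat where "\<bar>z\<bar> < real n" using reals_Archimedean2 by blast
        then show ?thesis by (intro exI[of _ n]) auto
      qed
      then show ?thesis unfolding sp by auto
    qed
    show "\<forall>a\<in>range (\<lambda>n::nat. {-real n<..real n}). emeasure N a \<noteq> \<infinity>"
      using fin by (simp add: less_top)
  qed
qed

text \<open>The path of [L, L] is not known to be increasing here, so the library facts about
  interval_measure do not apply; finiteness on intervals holds for every F.\<close>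
lemma emeasure_interval_measure_Ioc_finite:
  "emeasure (interval_measure F) {a<..b} < \<infinity>"
proof -
  let ?I = "{(a, b). a \<le> (b::real)}" and ?G = "\<lambda>(a, b). {a<..b::real}"
    and ?mu = "\<lambda>(a, b). ennreal (F b - F a)"
  define P where "P \<mu>' \<longleftrightarrow> (\<forall>i\<in>?I. \<mu>' (?G i) = ?mu i) \<and> measure_space UNIV (sigma_sets UNIV (?G`?I)) \<mu>'" for \<mu>'
  show ?thesis
  proof (cases "a \<le> b")
    case False then show ?thesis by simp
  next
    case ab: True
    show ?thesis
    proof (cases "(\<exists>\<mu>'. P \<mu>') \<and> \<not> (\<forall>i\<in>?I. ?mu i = 0)")
      case True
      then have eq: "interval_measure F = measure_of UNIV (?G`?I) (Eps P)"
        unfolding interval_measure_def extend_measure_def P_def by simp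
      have P: "P (Eps P)" using True by (metis someI_ex)
      have "Eps P {a<..b} = ennreal (F b - F a)" using P ab unfolding P_def by auto
      then show ?thesis unfolding eq emeasure_measure_of_conv by auto
    next
      case False
      have eq: "interval_measure F = measure_of UNIV (?G`?I) (\<lambda>_. 0)"
        unfolding interval_measure_def extend_measure_def
        by (rule if_not_P) (use False in \<open>simp add: P_def\<close>)
      show ?thesis unfolding eq emeasure_measure_of_conv by auto
    qed
  qed
qed

lemma integrable_bounded_finite_support:
  fixes g :: "real \<Rightarrow> real" and M :: "real measure"
  assumes sM: "sets M = sets borel" and g: "g \<in> borel_measurable borel"
    and S: "S \<in> sets borel" "emeasure M S < \<infinity>" and bnd: "\<And>s. \<bar>g s\<bar> \<le> C * indicator S s"
  shows "integrable M g"
proof -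
  have gm: "g \<in> borel_measurable M" using g measurable_cong_sets[OF sM refl] by blast
  have SM: "S \<in> sets M" using S sM by simp
  have "integrable M (\<lambda>s. C * indicator S s)"
    using SM S by (intro integrable_mult_right integrable_real_indicator) auto
  then show ?thesis
  proof (rule Bochner_Integration.integrable_bound[OF _ gm], intro AE_I2)
    fix s
    have "\<bar>g s\<bar> \<le> C * indicator S s" by (rule bnd)
    also have "\<dots> \<le> \<bar>C * indicator S s\<bar>" by (rule abs_ge_self)
    finally show "norm (g s) \<le> norm (C * indicator S s :: real)" by simp
  qed
qed

lemma Fubini_bounded_rectangle:
  fixes h :: "real \<Rightarrow> real \<Rightarrow> real" and M1 M2 :: "real measure"
  assumes sf1: "sigma_finite_measure M1" and sf2: "sigma_finite_measure M2"
    and s1: "sets M1 = sets borel" and s2: "sets M2 = sets borel"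
    and meas: "(\<lambda>(u, s). h u s) \<in> borel_measurable (borel \<Otimes>\<^sub>M borel)"
    and A: "A \<in> sets borel" "emeasure M1 A < \<infinity>"
    and B: "B \<in> sets borel" "emeasure M2 B < \<infinity>"
    and bnd: "\<And>u s. \<bar>h u s\<bar> \<le> C * indicator (A \<times> B) (u, s)"
  shows "(\<integral>u. (\<integral>s. h u s \<partial>M2) \<partial>M1) = (\<integral>s. (\<integral>u. h u s \<partial>M1) \<partial>M2)"
    and "integrable M1 (\<lambda>u. \<integral>s. h u s \<partial>M2)"
    and "integrable M2 (\<lambda>s. \<integral>u. h u s \<partial>M1)"
proof -
  interpret P: pair_sigma_finite M1 M2 using sf1 sf2 by (simp add: pair_sigma_finite_def)
  have sP: "sets (M1 \<Otimes>\<^sub>M M2) = sets (borel \<Otimes>\<^sub>M borel)"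
    by (intro sets_pair_measure_cong s1 s2)
  have m: "(\<lambda>(u, s). h u s) \<in> borel_measurable (M1 \<Otimes>\<^sub>M M2)"
    using meas measurable_cong_sets[OF sP refl] by blast
  have AB: "A \<times> B \<in> sets (M1 \<Otimes>\<^sub>M M2)" using A B s1 s2 by auto
  have "emeasure (M1 \<Otimes>\<^sub>M M2) (A \<times> B) = emeasure M1 A * emeasure M2 B"
    using A B s1 s2 by (intro P.M2.emeasure_pair_measure_Times) auto
  also have "\<dots> < \<infinity>" using A B by (simp add: ennreal_mult_less_top)
  finally have fin: "emeasure (M1 \<Otimes>\<^sub>M M2) (A \<times> B) < \<infinity>" .
  have ib: "integrable (M1 \<Otimes>\<^sub>M M2) (\<lambda>z. C * indicator (A \<times> B) z)"
    using AB fin by (intro integrable_mult_right integrable_real_indicator) auto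
  have int: "integrable (M1 \<Otimes>\<^sub>M M2) (\<lambda>(u, s). h u s)"
  proof (rule Bochner_Integration.integrable_bound[OF ib m])
    show "AE z in M1 \<Otimes>\<^sub>M M2. norm ((\<lambda>(u, s). h u s) z) \<le> norm (C * indicator (A \<times> B) z)"
    proof (intro AE_I2)
      fix z :: "real \<times> real"
      obtain u s where z: "z = (u, s)" by (cases z)
      have "\<bar>h u s\<bar> \<le> C * indicator (A \<times> B) (u, s)" by (rule bnd)
      also have "\<dots> \<le> \<bar>C * indicator (A \<times> B) (u, s)\<bar>" by (rule abs_ge_self)
      finally show "norm ((\<lambda>(u, s). h u s) z) \<le> norm (C * indicator (A \<times> B) z)" unfolding z by simp
    qed
  qed
  show "(\<integral>u. (\<integral>s. h u s \<partial>M2) \<partial>M1) = (\<integral>s. (\<integral>u. h u s \<partial>M1) \<partial>M2)"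
    using P.Fubini_integral[OF int] by simp
  show "integrable M1 (\<lambda>u. \<integral>s. h u s \<partial>M2)"
    using P.integrable_fst[OF int] by simp
  show "integrable M2 (\<lambda>s. \<integral>u. h u s \<partial>M1)"
    using P.integrable_snd[OF int] by simp
qed

lemma emeasure_lborel_Icc_finite: "emeasure lborel {a..b::real} < \<infinity>"
  by (cases "a \<le> b") auto

lemma emeasure_lborel_Ioc_finite: "emeasure lborel {a<..b::real} < \<infinity>"
  by (cases "a \<le> b") auto

lemma integrable_indicator_Icc_mult:
  fixes f :: "real \<Rightarrow> real"
  assumes "f \<in> borel_measurable borel" and "\<And>u. \<bar>f u\<bar> \<le> C"
  shows "integrable lborel (\<lambda>u. indicator {a..b} u * f u)"
  by (rule integrable_bounded_finite_support[where C=C and S="{a..b}"])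
     (use assms emeasure_lborel_Icc_finite in \<open>auto simp: indicator_def\<close>)

lemma lborel_set_integral_Icc_Ioc:
  fixes g :: "real \<Rightarrow> real"
  assumes [measurable]: "g \<in> borel_measurable borel"
  shows "(LBINT s:{a..b}. g s) = (LBINT s:{a<..b}. g s)"
  unfolding set_lebesgue_integral_def
proof (rule integral_cong_AE)
  show "AE s in lborel. indicator {a..b} s *\<^sub>R g s = indicator {a<..b} s *\<^sub>R g s"
    using AE_lborel_singleton[of a] by eventually_elim (auto simp: indicator_def)
qed simp_all

lemma lborel_set_integral_shift:
  fixes f y :: "real \<Rightarrow> real"
  assumes [measurable]: "f \<in> borel_measurable borel" "y \<in> borel_measurable borel"
  shows "(LBINT u:{-p..0}. f u * y (v + u)) = (LBINT w:{v-p<..v}. f (w - v) * y w)"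
proof -
  have "(LBINT w:{v-p<..v}. f (w - v) * y w) = (\<integral>u. indicator {v-p<..v} (v + 1 * u) * (f (v + 1 * u - v) * y (v + 1 * u)) \<partial>lborel)"
    unfolding set_lebesgue_integral_def
    using lborel_integral_real_affine[of 1 "\<lambda>w. indicator {v-p<..v} w * (f (w - v) * y w)" v] by simp
  also have "\<dots> = (LBINT u:{-p<..0}. f u * y (v + u))"
    unfolding set_lebesgue_integral_def by (intro Bochner_Integration.integral_cong) (auto simp: indicator_def)
  also have "\<dots> = (LBINT u:{-p..0}. f u * y (v + u))"
    by (rule lborel_set_integral_Icc_Ioc[symmetric]) measurable
  finally show ?thesis ..
qed

lemma borel_measurable_continuous_Icc_supported:
  fixes f :: "real \<Rightarrow> real"
  assumes "continuous_on {a..b} f" "\<And>u. u \<notin> {a..b} \<Longrightarrow> f u = 0"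
  shows "f \<in> borel_measurable borel"
proof -
  have "(\<lambda>u. indicator {a..b} u *\<^sub>R f u) \<in> borel_measurable borel"
    by (intro borel_measurable_continuous_on_indicator assms(1)) auto
  moreover have "(\<lambda>u. indicator {a..b} u *\<^sub>R f u) = f"
    using assms(2) by (auto simp: indicator_def fun_eq_iff)
  ultimately show ?thesis by simp
qed

lemma bounded_continuous_Icc_supported:
  fixes f :: "real \<Rightarrow> real"
  assumes "continuous_on {a..b} f" "\<And>u. u \<notin> {a..b} \<Longrightarrow> f u = 0"
  obtains C where "\<And>u. \<bar>f u\<bar> \<le> C"
proof -
  have "compact (f ` {a..b})" by (intro compact_continuous_image assms(1)) simp
  then obtain B where B: "\<forall>y\<in>f ` {a..b}. norm y \<le> B"
    using compact_imp_bounded bounded_iff by metis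
  have "\<bar>f u\<bar> \<le> max B 0" for u
    using B assms(2)[of u] by (cases "u \<in> {a..b}") force+
  then show ?thesis using that by blast
qed

lemma abs_integral_diff_le_kernel:
  fixes g h y :: "real \<Rightarrow> real" and M :: "real measure"
  assumes int: "integrable M g" "integrable M h" "integrable M (\<lambda>\<sigma>. g \<sigma> * y \<sigma>)" "integrable M (\<lambda>\<sigma>. h \<sigma> * y \<sigma>)"
    and nonneg: "\<And>\<sigma>. 0 \<le> g \<sigma>" and le: "\<And>\<sigma>. g \<sigma> \<le> h \<sigma>"
    and bounded: "\<And>\<sigma>. h \<sigma> \<noteq> 0 \<Longrightarrow> \<bar>y \<sigma>\<bar> \<le> K"
  shows "\<bar>(\<integral>\<sigma>. h \<sigma> * y \<sigma> \<partial>M) - (\<integral>\<sigma>. g \<sigma> * y \<sigma> \<partial>M)\<bar> \<le> K * (\<integral>\<sigma>. h \<sigma> \<partial>M) - K * (\<integral>\<sigma>. g \<sigma> \<partial>M)"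
proof -
  have pointwise: "\<bar>h \<sigma> * y \<sigma> - g \<sigma> * y \<sigma>\<bar> \<le> K * h \<sigma> - K * g \<sigma>" for \<sigma>
  proof (cases "h \<sigma> = 0")
    case True
    then show ?thesis using nonneg[of \<sigma>] le[of \<sigma>] by simp
  next
    case False
    have "\<bar>h \<sigma> * y \<sigma> - g \<sigma> * y \<sigma>\<bar> = (h \<sigma> - g \<sigma>) * \<bar>y \<sigma>\<bar>"
      using le[of \<sigma>] by (simp add: abs_mult left_diff_distrib[symmetric])
    also have "\<dots> \<le> (h \<sigma> - g \<sigma>) * K"
      using bounded[OF False] le[of \<sigma>] by (intro mult_left_mono) auto
    finally show ?thesis by (simp add: algebra_simps)
  qed
  have "\<bar>(\<integral>\<sigma>. h \<sigma> * y \<sigma> \<partial>M) - (\<integral>\<sigma>. g \<sigma> * y \<sigma> \<partial>M)\<bar> = \<bar>\<integral>\<sigma>. h \<sigma> * y \<sigma> - g \<sigma> * y \<sigma> \<partial>M\<bar>"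
    using int by simp
  also have "\<dots> \<le> (\<integral>\<sigma>. \<bar>h \<sigma> * y \<sigma> - g \<sigma> * y \<sigma>\<bar> \<partial>M)"
    by (rule integral_abs_bound)
  also have "\<dots> \<le> (\<integral>\<sigma>. K * h \<sigma> - K * g \<sigma> \<partial>M)"
    by (rule integral_mono) (use int pointwise in auto)
  also have "\<dots> = K * (\<integral>\<sigma>. h \<sigma> \<partial>M) - K * (\<integral>\<sigma>. g \<sigma> \<partial>M)"
    using int by simp
  finally show ?thesis .
qed

lemma bounded_variation_on_kernel_integral:
  fixes k :: "real \<Rightarrow> real \<Rightarrow> real" and y :: "real \<Rightarrow> real" and M :: "real measure"
  assumes ab: "a \<le> b" and M_sets: "sets M = sets borel"
    and S: "S \<in> sets borel" "emeasure M S < \<infinity>"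
    and k_meas: "\<And>t. k t \<in> borel_measurable borel" and y_meas: "y \<in> borel_measurable borel"
    and nonneg: "\<And>t \<sigma>. t \<in> {a..b} \<Longrightarrow> 0 \<le> k t \<sigma>"
    and mono: "\<And>s t \<sigma>. a \<le> s \<Longrightarrow> s \<le> t \<Longrightarrow> t \<le> b \<Longrightarrow> k s \<sigma> \<le> k t \<sigma>"
    and k_le: "\<And>\<sigma>. k b \<sigma> \<le> B"
    and support: "\<And>\<sigma>. k b \<sigma> \<noteq> 0 \<Longrightarrow> \<sigma> \<in> S \<and> \<bar>y \<sigma>\<bar> \<le> K"
  shows "bounded_variation_on (\<lambda>t. \<integral>\<sigma>. k t \<sigma> * y \<sigma> \<partial>M) a b"
proof (rule bounded_variation_on_dominated[OF ab])
  have vanish: "k t \<sigma> = 0" if "t \<in> {a..b}" "k b \<sigma> = 0" for t \<sigma>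
    using nonneg[OF that(1), of \<sigma>] mono[of t b \<sigma>] that by auto
  have "0 \<le> B" using nonneg[of b] k_le ab by (meson atLeastAtMost_iff order.trans order_refl)
  have bounds: "\<bar>k t \<sigma>\<bar> \<le> B * indicator S \<sigma> \<and> \<bar>k t \<sigma> * y \<sigma>\<bar> \<le> (B * \<bar>K\<bar>) * indicator S \<sigma>"
    if "t \<in> {a..b}" for t \<sigma>
  proof (cases "k b \<sigma> = 0")
    case False
    then have "\<bar>k t \<sigma>\<bar> \<le> B" "\<bar>y \<sigma>\<bar> \<le> \<bar>K\<bar>" "\<sigma> \<in> S"
      using support[OF False] nonneg[OF that, of \<sigma>] mono[of t b \<sigma>] k_le[of \<sigma>] that by auto
    then show ?thesis by (simp add: abs_mult mult_mono')
  qed (use vanish[OF that] \<open>0 \<le> B\<close> in simp)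
  have int_k: "integrable M (k t)" and int_ky: "integrable M (\<lambda>\<sigma>. k t \<sigma> * y \<sigma>)" if "t \<in> {a..b}" for t
    using bounds[OF that] k_meas y_meas
    by (auto intro!: integrable_bounded_finite_support[OF M_sets _ S])
  fix s t assume "a \<le> s" "s \<le> t" "t \<le> b"
  then show "\<bar>(\<integral>\<sigma>. k t \<sigma> * y \<sigma> \<partial>M) - (\<integral>\<sigma>. k s \<sigma> * y \<sigma> \<partial>M)\<bar>
      \<le> K * (\<integral>\<sigma>. k t \<sigma> \<partial>M) - K * (\<integral>\<sigma>. k s \<sigma> \<partial>M)"
    using int_k[of s] int_k[of t] int_ky[of s] int_ky[of t] nonneg[of s] mono[of s t] vanish[of t] support
    by (intro abs_integral_diff_le_kernel) auto
qed

section \<open>The delay kernels\<close>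

lemma Fker_eq_integral: "Fker f p t s = (\<integral>u. indicator {max (-p) (s - t)..min s 0} u * f u \<partial>lborel)"
  unfolding Fker_def set_lebesgue_integral_def by simp

lemma borel_measurable_Fker:
  fixes f :: "real \<Rightarrow> real"
  assumes fm[measurable]: "f \<in> borel_measurable borel"
  shows "(\<lambda>s. Fker f p t s) \<in> borel_measurable borel"
proof -
  have m: "(\<lambda>(s, u). (if -p \<le> u \<and> s - t \<le> u \<and> u \<le> s \<and> u \<le> 0 then 1 else 0) * f u) \<in> borel_measurable (borel \<Otimes>\<^sub>M borel)"
    by measurable
  have se: "sets (borel \<Otimes>\<^sub>M lborel) = sets (borel \<Otimes>\<^sub>M (borel :: real measure))"
    by (rule sets_pair_measure_cong) simp_all
  have m': "(\<lambda>(s, u). (if -p \<le> u \<and> s - t \<le> u \<and> u \<le> s \<and> u \<le> 0 then 1 else 0) * f u) \<in> borel_measurable (borel \<Otimes>\<^sub>M lborel)"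
    using m measurable_cong_sets[OF se refl] by blast
  have "(\<lambda>s. \<integral>u. (if -p \<le> u \<and> s - t \<le> u \<and> u \<le> s \<and> u \<le> 0 then 1 else 0) * f u \<partial>lborel) \<in> borel_measurable borel"
    using lborel.borel_measurable_lebesgue_integral[OF m'] by simp
  moreover have "(\<lambda>s. \<integral>u. (if -p \<le> u \<and> s - t \<le> u \<and> u \<le> s \<and> u \<le> 0 then 1 else 0) * f u \<partial>lborel) = (\<lambda>s. Fker f p t s)"
    unfolding Fker_eq_integral by (intro ext Bochner_Integration.integral_cong) (simp_all add: indicator_def)
  ultimately show ?thesis by simp
qed

lemma Fker_nonneg:
  fixes f :: "real \<Rightarrow> real"
  assumes pos: "\<And>u. f u \<ge> 0"
  shows "0 \<le> Fker f p t s"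
  unfolding Fker_eq_integral by (rule integral_nonneg_AE) (use pos in auto)

lemma Fker_mono:
  fixes f :: "real \<Rightarrow> real"
  assumes fm: "f \<in> borel_measurable borel" and fb: "\<And>u. \<bar>f u\<bar> \<le> C" and pos: "\<And>u. f u \<ge> 0"
    and tt: "t \<le> t'"
  shows "Fker f p t s \<le> Fker f p t' s"
  unfolding Fker_eq_integral
proof (rule integral_mono)
  fix u
  show "indicator {max (-p) (s - t)..min s 0} u * f u \<le> indicator {max (-p) (s - t')..min s 0} u * f u"
    using tt pos[of u] by (auto simp: indicator_def)
qed (rule integrable_indicator_Icc_mult[OF fm fb])+

lemma Fker_le:
  fixes f :: "real \<Rightarrow> real"
  assumes fm: "f \<in> borel_measurable borel" and fb: "\<And>u. \<bar>f u\<bar> \<le> C" and pos: "\<And>u. f u \<ge> 0"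
    and p: "p \<ge> 0"
  shows "Fker f p t s \<le> C * p"
proof -
  have "Fker f p t s \<le> (\<integral>u. C * indicator {-p..0} u \<partial>lborel)"
    unfolding Fker_eq_integral
  proof (rule integral_mono)
    show "integrable lborel (\<lambda>u. indicator {max (-p) (s - t)..min s 0} u * f u)"
      by (rule integrable_indicator_Icc_mult[OF fm fb])
    show "integrable lborel (\<lambda>u. C * indicator {-p..0} u)"
      using emeasure_lborel_Icc_finite by (intro integrable_mult_right integrable_real_indicator) auto
    fix u
    show "indicator {max (-p) (s - t)..min s 0} u * f u \<le> C * indicator {-p..0} u"
      using fb[of u] pos[of u] by (auto simp: indicator_def)
  qed
  also have "\<dots> = C * p" using p by simp
  finally show ?thesis .
qed

lemma Fker_eq_window_integral:
  fixes f :: "real \<Rightarrow> real"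
  assumes [measurable]: "f \<in> borel_measurable borel"
  shows "(\<integral>u. indicator {-q..0} u * indicator {u<..t+u} s * f u \<partial>lborel) = indicator {-q<..t} s * Fker f q t s"
proof -
  have "(\<integral>u. indicator {-q..0} u * indicator {u<..t+u} s * f u \<partial>lborel)
      = (\<integral>u. indicator {-q<..t} s * (indicator {max (-q) (s - t)..min s 0} u * f u) \<partial>lborel)"
  proof (rule integral_cong_AE)
    show "AE u in lborel. indicator {-q..0} u * indicator {u<..t+u} s * f u
        = indicator {-q<..t} s * (indicator {max (-q) (s - t)..min s 0} u * f u)"
      using AE_lborel_singleton[of s] by eventually_elim (auto simp: indicator_def)
  qed (unfold indicator_def greaterThanAtMost_iff, measurable)+
  then show ?thesis unfolding Fker_eq_integral by simp
qed

lemma Fker_eq_lag_integral: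
  fixes f :: "real \<Rightarrow> real"
  assumes [measurable]: "f \<in> borel_measurable borel"
  shows "(\<integral>v. indicator {0..t} v * indicator {v-q<..v} w * f (w - v) \<partial>lborel) = indicator {-q<..t} w * Fker f q t w"
proof -
  have "(\<integral>v. indicator {0..t} v * indicator {v-q<..v} w * f (w - v) \<partial>lborel)
      = (\<integral>u. indicator {0..t} (w - u) * indicator {w-u-q<..w-u} w * f u \<partial>lborel)"
    using lborel_integral_real_affine[of "-1" "\<lambda>v. indicator {0..t} v * indicator {v-q<..v} w * f (w - v)" w]
    by simp
  also have "\<dots> = (\<integral>u. indicator {-q..0} u * indicator {u<..t+u} w * f u \<partial>lborel)"
  proof (rule integral_cong_AE)
    show "AE u in lborel. indicator {0..t} (w - u) * indicator {w-u-q<..w-u} w * f u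
        = indicator {-q..0} u * indicator {u<..t+u} w * f u"
      using AE_lborel_singleton[of w] AE_lborel_singleton[of "-q"]
      by eventually_elim (auto simp: indicator_def)
  qed (unfold indicator_def greaterThanAtMost_iff, measurable)+
  finally show ?thesis using Fker_eq_window_integral[of f q t w] by simp
qed

lemma set_integral_window_integrals_eq_Fker:
  fixes f y :: "real \<Rightarrow> real" and N :: "real measure"
  assumes sN: "sets N = sets borel" and finN: "\<And>a b. emeasure N {a<..b} < \<infinity>"
    and fm[measurable]: "f \<in> borel_measurable borel" and fb: "\<And>u. \<bar>f u\<bar> \<le> C"
    and ym[measurable]: "y \<in> borel_measurable borel" and yb: "\<And>s. s \<in> {-q<..t} \<Longrightarrow> \<bar>y s\<bar> \<le> K"
    and K: "0 \<le> K"
  shows "(LBINT u:{-q..0}. f u * (LINT s:{u<..t+u}|N. y s)) = (LINT s:{-q<..t}|N. Fker f q t s * y s)"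
proof -
  define h where "h u s = indicator {-q..0} u * indicator {u<..t+u} s * f u * y s" for u s
  have hm: "(\<lambda>(u, s). h u s) \<in> borel_measurable (borel \<Otimes>\<^sub>M borel)"
    unfolding h_def indicator_def greaterThanAtMost_iff by measurable
  have hb: "\<bar>h u s\<bar> \<le> (C * K) * indicator ({-q..0} \<times> {-q<..t}) (u, s)" for u s
  proof (cases "u \<in> {-q..0} \<and> s \<in> {u<..t+u}")
    case True
    then have "\<bar>f u\<bar> \<le> C" "\<bar>y s\<bar> \<le> K" "(u, s) \<in> {-q..0} \<times> {-q<..t}" using fb yb by auto
    then show ?thesis using True by (simp add: h_def abs_mult mult_mono')
  next
    case False
    have "0 \<le> C" using fb[of 0] by linarith
    then show ?thesis using False K by (auto simp: h_def)
  qed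
  note Fubini = Fubini_bounded_rectangle[OF lborel.sigma_finite_measure_axioms
      sigma_finite_measure_Ioc_finite[OF sN finN] sets_lborel sN hm _ emeasure_lborel_Icc_finite _ finN hb]
  have "(\<integral>s. h u s \<partial>N) = indicator {-q..0} u * (f u * (LINT s:{u<..t+u}|N. y s))" for u
  proof -
    have "h u s = (indicator {-q..0} u * f u) * (indicator {u<..t+u} s * y s)" for s
      by (simp add: h_def ac_simps)
    then show ?thesis by (simp add: set_lebesgue_integral_def mult.assoc)
  qed
  then have "(LBINT u:{-q..0}. f u * (LINT s:{u<..t+u}|N. y s)) = (\<integral>u. (\<integral>s. h u s \<partial>N) \<partial>lborel)"
    by (simp add: set_lebesgue_integral_def)
  also have "\<dots> = (\<integral>s. (\<integral>u. h u s \<partial>lborel) \<partial>N)"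
    by (rule Fubini(1)) simp_all
  also have "\<dots> = (LINT s:{-q<..t}|N. Fker f q t s * y s)"
  proof -
    have "(\<integral>u. h u s \<partial>lborel) = indicator {-q<..t} s * (Fker f q t s * y s)" for s
    proof -
      have "(\<integral>u. h u s \<partial>lborel) = (\<integral>u. indicator {-q..0} u * indicator {u<..t+u} s * f u \<partial>lborel) * y s"
        unfolding h_def by (rule integral_mult_left_zero)
      then show ?thesis using Fker_eq_window_integral[OF fm, of q t s] by simp
    qed
    then show ?thesis by (simp add: set_lebesgue_integral_def)
  qed
  finally show ?thesis .
qed

lemma set_integral_lagged_integrals_eq_Fker:
  fixes f y :: "real \<Rightarrow> real" and N :: "real measure"
  assumes sN: "sets N = sets borel" and finN: "\<And>a b. emeasure N {a<..b} < \<infinity>"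
    and fm[measurable]: "f \<in> borel_measurable borel" and fb: "\<And>u. \<bar>f u\<bar> \<le> C"
    and ym[measurable]: "y \<in> borel_measurable borel" and yb: "\<And>s. s \<in> {-q<..t} \<Longrightarrow> \<bar>y s\<bar> \<le> K"
    and K: "0 \<le> K" and q: "0 \<le> q"
  shows "(LBINT v:{0..t}. (LINT w:{v-q<..v}|N. f (w - v) * y w)) = (LINT s:{-q<..t}|N. Fker f q t s * y s)"
    and "integrable lborel (\<lambda>v. indicator {0..t} v * (LINT w:{v-q<..v}|N. f (w - v) * y w))"
proof -
  define h where "h v w = indicator {0..t} v * indicator {v-q<..v} w * f (w - v) * y w" for v w
  have hm: "(\<lambda>(v, w). h v w) \<in> borel_measurable (borel \<Otimes>\<^sub>M borel)"
    unfolding h_def indicator_def greaterThanAtMost_iff by measurable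
  have hb: "\<bar>h v w\<bar> \<le> (C * K) * indicator ({0..t} \<times> {-q<..t}) (v, w)" for v w
  proof (cases "v \<in> {0..t} \<and> w \<in> {v-q<..v}")
    case True
    then have "\<bar>f (w - v)\<bar> \<le> C" "\<bar>y w\<bar> \<le> K" "(v, w) \<in> {0..t} \<times> {-q<..t}" using fb yb q by auto
    then show ?thesis using True by (simp add: h_def abs_mult mult_mono')
  next
    case False
    have "0 \<le> C" using fb[of 0] by linarith
    then show ?thesis using False K by (auto simp: h_def)
  qed
  note Fubini = Fubini_bounded_rectangle[OF lborel.sigma_finite_measure_axioms
      sigma_finite_measure_Ioc_finite[OF sN finN] sets_lborel sN hm _ emeasure_lborel_Icc_finite _ finN hb]
  have inner: "(\<integral>w. h v w \<partial>N) = indicator {0..t} v * (LINT w:{v-q<..v}|N. f (w - v) * y w)" for v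
  proof -
    have "h v w = indicator {0..t} v * (indicator {v-q<..v} w * (f (w - v) * y w))" for w
      by (simp add: h_def ac_simps)
    then show ?thesis by (simp add: set_lebesgue_integral_def)
  qed
  have "(LBINT v:{0..t}. (LINT w:{v-q<..v}|N. f (w - v) * y w)) = (\<integral>v. (\<integral>w. h v w \<partial>N) \<partial>lborel)"
    by (simp add: inner set_lebesgue_integral_def)
  also have "\<dots> = (\<integral>w. (\<integral>v. h v w \<partial>lborel) \<partial>N)"
    by (rule Fubini(1)) simp_all
  also have "\<dots> = (LINT s:{-q<..t}|N. Fker f q t s * y s)"
  proof -
    have "(\<integral>v. h v w \<partial>lborel) = indicator {-q<..t} w * (Fker f q t w * y w)" for w
    proof -
      have "(\<integral>v. h v w \<partial>lborel) = (\<integral>v. indicator {0..t} v * indicator {v-q<..v} w * f (w - v) \<partial>lborel) * y w"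
        unfolding h_def by (rule integral_mult_left_zero)
      then show ?thesis using Fker_eq_lag_integral[OF fm, of t q w] by simp
    qed
    then show ?thesis by (simp add: set_lebesgue_integral_def)
  qed
  finally show "(LBINT v:{0..t}. (LINT w:{v-q<..v}|N. f (w - v) * y w)) = (LINT s:{-q<..t}|N. Fker f q t s * y s)" .
  show "integrable lborel (\<lambda>v. indicator {0..t} v * (LINT w:{v-q<..v}|N. f (w - v) * y w))"
    using Fubini(2) by (simp add: inner)
qed

lemma bounded_variation_on_Ioc_integral:
  fixes M :: "real measure" and y :: "real \<Rightarrow> real"
  assumes M_sets: "sets M = sets borel" and fin: "\<And>a b. emeasure M {a<..b} < \<infinity>"
    and T: "0 \<le> T" and y: "y \<in> borel_measurable borel" "\<And>s. s \<le> T \<Longrightarrow> \<bar>y s\<bar> \<le> K"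
  shows "bounded_variation_on (\<lambda>t. \<integral>\<sigma>. indicator {0<..t} \<sigma> * y \<sigma> \<partial>M) 0 T"
  by (rule bounded_variation_on_kernel_integral[OF T M_sets _ fin _ y(1), where B=1 and K=K])
     (use y(2) in \<open>auto simp: indicator_def\<close>)

lemma bounded_variation_on_Fker_integral:
  fixes M :: "real measure" and f y :: "real \<Rightarrow> real"
  assumes M_sets: "sets M = sets borel" and fin: "\<And>a b. emeasure M {a<..b} < \<infinity>"
    and f: "f \<in> borel_measurable borel" "\<And>u. \<bar>f u\<bar> \<le> C" "\<And>u. 0 \<le> f u" and a: "0 \<le> a"
    and T: "0 \<le> T" and y: "y \<in> borel_measurable borel" "\<And>s. s \<le> T \<Longrightarrow> \<bar>y s\<bar> \<le> K"
  shows "bounded_variation_on (\<lambda>t. \<integral>\<sigma>. (indicator {-a<..t} \<sigma> * Fker f a t \<sigma>) * y \<sigma> \<partial>M) 0 T"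
proof (rule bounded_variation_on_kernel_integral[OF T M_sets _ fin _ y(1), where B="C * a" and K=K])
  show "(\<lambda>\<sigma>. indicator {-a<..t} \<sigma> * Fker f a t \<sigma>) \<in> borel_measurable borel" for t
    using borel_measurable_Fker[OF f(1)] by measurable
  show "0 \<le> indicator {-a<..t} \<sigma> * Fker f a t \<sigma>" for t \<sigma>
    using Fker_nonneg[of f, OF f(3)] by simp
  show "indicator {-a<..s} \<sigma> * Fker f a s \<sigma> \<le> indicator {-a<..t} \<sigma> * Fker f a t \<sigma>" if "s \<le> t" for s t \<sigma>
    using Fker_mono[OF f, of s t] Fker_nonneg[of f, OF f(3)] that
    by (auto simp: indicator_def)
  show "indicator {-a<..T} \<sigma> * Fker f a T \<sigma> \<le> C * a" for \<sigma>
    using Fker_le[OF f a, of T \<sigma>] Fker_nonneg[of f, OF f(3), of a T \<sigma>] by (simp add: indicator_def)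
  show "\<sigma> \<in> {-a<..T} \<and> \<bar>y \<sigma>\<bar> \<le> K" if "indicator {-a<..T} \<sigma> * Fker f a T \<sigma> \<noteq> 0" for \<sigma>
    using that y(2)[of \<sigma>] by (auto simp: indicator_def split: if_splits)
qed simp

section \<open>Pathwise analysis of the variance equation\<close>

text \<open>A single path of the variance equation: x, phi and N stand for X(omega), Phi(omega)
  and dS(omega), and e, cm, cn, fm, fn for eta, c_mu, c_nu, f_mu, f_nu.\<close>
locale cdgarch_path =
  fixes p q r e cm cn :: real and fm fn :: "real \<Rightarrow> real" and N :: "real measure"
    and phi x :: "real \<Rightarrow> real"
  assumes pq: "0 \<le> p" "0 \<le> q" and r_def: "r = max p q"
    and fm_cont: "continuous_on {-p..0} fm" and fm_nonneg: "\<And>u. 0 \<le> fm u"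
    and fm_supp: "\<And>u. u \<notin> {-p..0} \<Longrightarrow> fm u = 0"
    and fn_cont: "continuous_on {-q..0} fn" and fn_nonneg: "\<And>u. 0 \<le> fn u"
    and fn_supp: "\<And>u. u \<notin> {-q..0} \<Longrightarrow> fn u = 0"
    and N_sets: "sets N = sets borel" and N_Ioc_finite: "\<And>a b. emeasure N {a<..b} < \<infinity>"
    and cadlag: "cadlag_from (-r) x"
    and initial: "\<And>t. t \<in> {-r..0} \<Longrightarrow> x t = phi t"
    and equation: "\<And>t. 0 < t \<Longrightarrow> cdgarch_eq p q e cm cn fm fn N phi x t"
begin

lemma r_ge: "-r \<le> -p" "-r \<le> -q" "-r \<le> 0"
  using pq r_def by auto

lemma fm_measurable [measurable]: "fm \<in> borel_measurable borel"
  by (rule borel_measurable_continuous_Icc_supported[OF fm_cont fm_supp])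

lemma fn_measurable [measurable]: "fn \<in> borel_measurable borel"
  by (rule borel_measurable_continuous_Icc_supported[OF fn_cont fn_supp])

text \<open>Borel measurable versions of x and of its left limits. The equation only evaluates x on
  [-r, \<infinity>) and its left limits on (-r, \<infinity>), where they agree with these.\<close>
definition x_meas :: "real \<Rightarrow> real" where
  "x_meas s = indicator {-r..} s * x s"

definition x_left_meas :: "real \<Rightarrow> real" where
  "x_left_meas s = indicator {-r<..} s * lim_left x s"

lemma x_meas_measurable [measurable]: "x_meas \<in> borel_measurable borel"
  unfolding x_meas_def[abs_def] by (rule borel_measurable_cadlag_from[OF cadlag])

lemma x_left_meas_measurable [measurable]: "x_left_meas \<in> borel_measurable borel"
  unfolding x_left_meas_def[abs_def] by (rule borel_measurable_cadlag_from_lim_left[OF cadlag])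

lemma x_meas_eq: "-r \<le> s \<Longrightarrow> x_meas s = x s"
  by (simp add: x_meas_def)

lemma x_left_meas_eq: "-r < s \<Longrightarrow> x_left_meas s = lim_left x s"
  by (simp add: x_left_meas_def)

lemma path_bounded:
  obtains K where "0 \<le> K" "\<And>s. s \<le> T \<Longrightarrow> \<bar>x_meas s\<bar> \<le> K" "\<And>s. s \<le> T \<Longrightarrow> \<bar>x_left_meas s\<bar> \<le> K"
proof -
  obtain K where K: "\<forall>s\<in>{-r..T}. \<bar>x s\<bar> \<le> K"
    using cadlag_from_bounded[OF cadlag] by blast
  have "\<bar>x_meas s\<bar> \<le> \<bar>K\<bar>" if "s \<le> T" for s
  proof (cases "-r \<le> s")
    case True
    then have "\<bar>x s\<bar> \<le> K" using K that by simp
    then show ?thesis using True by (simp add: x_meas_def)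
  qed (simp add: x_meas_def)
  moreover have "\<bar>x_left_meas s\<bar> \<le> \<bar>K\<bar>" if "s \<le> T" for s
    using cadlag_from_lim_left_bounded[OF cadlag K, of s] that
    by (auto simp: x_left_meas_def indicator_def)
  ultimately show ?thesis using that[of "\<bar>K\<bar>"] by simp
qed

lemma fm_bounded: obtains C where "\<And>u. \<bar>fm u\<bar> \<le> C"
  using bounded_continuous_Icc_supported[OF fm_cont fm_supp] by blast

lemma fn_bounded: obtains C where "\<And>u. \<bar>fn u\<bar> \<le> C"
  using bounded_continuous_Icc_supported[OF fn_cont fn_supp] by blast

lemma equation_unfolded:
  assumes "0 \<le> t"
  shows "x t = x 0 + e * t - cm * (LBINT s:{0..t}. x s)
     + (LBINT u:{-p..0}. fm u * (LBINT s:{u..t+u}. x s))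
     + (LBINT u:{-q..0}. fn u * (LINT s:{u<..t+u}|N. lim_left x s))
     + cn * (LINT s:{0<..t}|N. lim_left x s)"
proof (cases "t = 0")
  case True
  have "(LBINT s:{u..u}. x s) = (LBINT s. indicator {u} s * x u)" for u
    unfolding set_lebesgue_integral_def by (rule Bochner_Integration.integral_cong) (auto simp: indicator_def)
  then have "(LBINT s:{u..u}. x s) = 0" for u by simp
  then show ?thesis using True by (simp add: set_lebesgue_integral_def)
next
  case False
  then have t: "0 < t" using assms by simp
  have "x 0 = phi 0" using initial r_ge by simp
  moreover have "theta e phi t = phi 0 + e * t" using t by (simp add: theta_def)
  ultimately show ?thesis using equation[OF t] unfolding cdgarch_eq_def by simp
qed

lemma mu_term_eq_Fker_meas:
  "(LBINT u:{-p..0}. fm u * (LBINT s:{u..t+u}. x s)) = (LBINT s:{-p<..t}. Fker fm p t s * x_meas s)"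
proof -
  obtain C where C: "\<And>u. \<bar>fm u\<bar> \<le> C" using fm_bounded by blast
  obtain K where K: "0 \<le> K" "\<And>s. s \<le> t \<Longrightarrow> \<bar>x_meas s\<bar> \<le> K" "\<And>s. s \<le> t \<Longrightarrow> \<bar>x_left_meas s\<bar> \<le> K"
    using path_bounded[of t] by blast
  have inner: "(LBINT s:{u..t+u}. x s) = (LBINT s:{u<..t+u}. x_meas s)" if "u \<in> {-p..0}" for u
  proof -
    have "(LBINT s:{u..t+u}. x s) = (LBINT s:{u..t+u}. x_meas s)"
      using that r_ge by (intro set_lebesgue_integral_cong) (auto simp: x_meas_eq)
    also have "\<dots> = (LBINT s:{u<..t+u}. x_meas s)"
      by (rule lborel_set_integral_Icc_Ioc) simp
    finally show ?thesis .
  qed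
  have "(LBINT u:{-p..0}. fm u * (LBINT s:{u..t+u}. x s))
      = (LBINT u:{-p..0}. fm u * (LBINT s:{u<..t+u}. x_meas s))"
    using inner by (intro set_lebesgue_integral_cong) auto
  also have "\<dots> = (LBINT s:{-p<..t}. Fker fm p t s * x_meas s)"
    by (rule set_integral_window_integrals_eq_Fker[OF sets_lborel emeasure_lborel_Ioc_finite
          fm_measurable C x_meas_measurable _ K(1)]) (use K(2) in auto)
  finally show ?thesis .
qed

lemma mu_term_eq_Fker:
  "(LBINT u:{-p..0}. fm u * (LBINT s:{u..t+u}. x s)) = (LBINT s:{-p..t}. Fker fm p t s * x s)"
proof -
  have "(LBINT s:{-p<..t}. Fker fm p t s * x_meas s) = (LBINT s:{-p..t}. Fker fm p t s * x_meas s)"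
    by (intro lborel_set_integral_Icc_Ioc[symmetric] borel_measurable_times
        borel_measurable_Fker fm_measurable x_meas_measurable)
  also have "\<dots> = (LBINT s:{-p..t}. Fker fm p t s * x s)"
    using r_ge by (intro set_lebesgue_integral_cong) (auto simp: x_meas_eq)
  finally show ?thesis using mu_term_eq_Fker_meas by simp
qed

lemma nu_term_eq_Fker:
  "(LBINT u:{-q..0}. fn u * (LINT s:{u<..t+u}|N. lim_left x s)) = (LINT s:{-q<..t}|N. Fker fn q t s * lim_left x s)"
proof -
  obtain C where C: "\<And>u. \<bar>fn u\<bar> \<le> C" using fn_bounded by blast
  obtain K where K: "0 \<le> K" "\<And>s. s \<le> t \<Longrightarrow> \<bar>x_meas s\<bar> \<le> K" "\<And>s. s \<le> t \<Longrightarrow> \<bar>x_left_meas s\<bar> \<le> K"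
    using path_bounded[of t] by blast
  have "(LBINT u:{-q..0}. fn u * (LINT s:{u<..t+u}|N. lim_left x s))
      = (LBINT u:{-q..0}. fn u * (LINT s:{u<..t+u}|N. x_left_meas s))"
  proof (intro set_lebesgue_integral_cong allI impI)
    fix u assume "u \<in> {-q..0}"
    then have "(LINT s:{u<..t+u}|N. lim_left x s) = (LINT s:{u<..t+u}|N. x_left_meas s)"
      using r_ge N_sets by (intro set_lebesgue_integral_cong) (auto simp: x_left_meas_eq)
    then show "fn u * (LINT s:{u<..t+u}|N. lim_left x s) = fn u * (LINT s:{u<..t+u}|N. x_left_meas s)"
      by simp
  qed simp
  also have "\<dots> = (LINT s:{-q<..t}|N. Fker fn q t s * x_left_meas s)"
    by (rule set_integral_window_integrals_eq_Fker[OF N_sets N_Ioc_finite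
          fn_measurable C x_left_meas_measurable _ K(1)]) (use K(3) in auto)
  also have "\<dots> = (LINT s:{-q<..t}|N. Fker fn q t s * lim_left x s)"
    using r_ge N_sets by (intro set_lebesgue_integral_cong) (auto simp: x_left_meas_eq)
  finally show ?thesis .
qed

lemma mu_lag_integral_eq_Fker:
  assumes "0 \<le> t"
  shows "(LBINT v:{0..t}. (LBINT u:{-p..0}. fm u * x (v + u))) = (LBINT s:{-p<..t}. Fker fm p t s * x_meas s)"
    and "integrable lborel (\<lambda>v. indicator {0..t} v * (LBINT u:{-p..0}. fm u * x (v + u)))"
proof -
  obtain C where C: "\<And>u. \<bar>fm u\<bar> \<le> C" using fm_bounded by blast
  obtain K where K: "0 \<le> K" "\<And>s. s \<le> t \<Longrightarrow> \<bar>x_meas s\<bar> \<le> K" "\<And>s. s \<le> t \<Longrightarrow> \<bar>x_left_meas s\<bar> \<le> K"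
    using path_bounded[of t] by blast
  note lagged = set_integral_lagged_integrals_eq_Fker[OF sets_lborel emeasure_lborel_Ioc_finite
      fm_measurable C x_meas_measurable _ K(1) pq(1)]
  have inner: "(LBINT u:{-p..0}. fm u * x (v + u)) = (LBINT w:{v-p<..v}. fm (w - v) * x_meas w)"
    if "v \<in> {0..t}" for v
  proof -
    have "(LBINT u:{-p..0}. fm u * x (v + u)) = (LBINT u:{-p..0}. fm u * x_meas (v + u))"
      using that r_ge by (intro set_lebesgue_integral_cong) (auto simp: x_meas_eq)
    also have "\<dots> = (LBINT w:{v-p<..v}. fm (w - v) * x_meas w)"
      by (rule lborel_set_integral_shift) simp_all
    finally show ?thesis .
  qed
  have "(LBINT v:{0..t}. (LBINT u:{-p..0}. fm u * x (v + u)))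
      = (LBINT v:{0..t}. (LBINT w:{v-p<..v}. fm (w - v) * x_meas w))"
    using inner by (intro set_lebesgue_integral_cong) auto
  also have "\<dots> = (LBINT s:{-p<..t}. Fker fm p t s * x_meas s)"
    by (rule lagged(1)) (use K(2) in auto)
  finally show "(LBINT v:{0..t}. (LBINT u:{-p..0}. fm u * x (v + u))) = (LBINT s:{-p<..t}. Fker fm p t s * x_meas s)" .
  have "integrable lborel (\<lambda>v. indicator {0..t} v * (LBINT w:{v-p<..v}. fm (w - v) * x_meas w))"
    by (rule lagged(2)) (use K(2) in auto)
  moreover have "indicator {0..t} v * (LBINT w:{v-p<..v}. fm (w - v) * x_meas w)
      = indicator {0..t} v * (LBINT u:{-p..0}. fm u * x (v + u))" for v
    using inner[of v] by (cases "v \<in> {0..t}") auto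
  ultimately show "integrable lborel (\<lambda>v. indicator {0..t} v * (LBINT u:{-p..0}. fm u * x (v + u)))"
    by simp
qed

lemma nu_lag_integral_eq_Fker:
  assumes "0 \<le> t"
  shows "(LBINT v:{0..t}. (LINT w:{v-q<..v}|N. fn (w - v) * lim_left x w))
      = (LINT s:{-q<..t}|N. Fker fn q t s * lim_left x s)"
    and "integrable lborel (\<lambda>v. indicator {0..t} v * (LINT w:{v-q<..v}|N. fn (w - v) * lim_left x w))"
proof -
  obtain C where C: "\<And>u. \<bar>fn u\<bar> \<le> C" using fn_bounded by blast
  obtain K where K: "0 \<le> K" "\<And>s. s \<le> t \<Longrightarrow> \<bar>x_meas s\<bar> \<le> K" "\<And>s. s \<le> t \<Longrightarrow> \<bar>x_left_meas s\<bar> \<le> K"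
    using path_bounded[of t] by blast
  note lagged = set_integral_lagged_integrals_eq_Fker[OF N_sets N_Ioc_finite
      fn_measurable C x_left_meas_measurable _ K(1) pq(2)]
  have inner: "(LINT w:{v-q<..v}|N. fn (w - v) * lim_left x w) = (LINT w:{v-q<..v}|N. fn (w - v) * x_left_meas w)"
    if "v \<in> {0..t}" for v
    using that r_ge N_sets by (intro set_lebesgue_integral_cong) (auto simp: x_left_meas_eq)
  have "(LBINT v:{0..t}. (LINT w:{v-q<..v}|N. fn (w - v) * lim_left x w))
      = (LBINT v:{0..t}. (LINT w:{v-q<..v}|N. fn (w - v) * x_left_meas w))"
    using inner by (intro set_lebesgue_integral_cong) auto
  also have "\<dots> = (LINT s:{-q<..t}|N. Fker fn q t s * x_left_meas s)"
    by (rule lagged(1)) (use K(3) in auto)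
  also have "\<dots> = (LINT s:{-q<..t}|N. Fker fn q t s * lim_left x s)"
    using r_ge N_sets by (intro set_lebesgue_integral_cong) (auto simp: x_left_meas_eq)
  finally show "(LBINT v:{0..t}. (LINT w:{v-q<..v}|N. fn (w - v) * lim_left x w))
      = (LINT s:{-q<..t}|N. Fker fn q t s * lim_left x s)" .
  have "integrable lborel (\<lambda>v. indicator {0..t} v * (LINT w:{v-q<..v}|N. fn (w - v) * x_left_meas w))"
    by (rule lagged(2)) (use K(3) in auto)
  moreover have "indicator {0..t} v * (LINT w:{v-q<..v}|N. fn (w - v) * x_left_meas w)
      = indicator {0..t} v * (LINT w:{v-q<..v}|N. fn (w - v) * lim_left x w)" for v
    using inner[of v] by (cases "v \<in> {0..t}") auto
  ultimately show "integrable lborel (\<lambda>v. indicator {0..t} v * (LINT w:{v-q<..v}|N. fn (w - v) * lim_left x w))"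
    by simp
qed

lemma set_integral_x_eq_x_meas:
  assumes "-r \<le> a"
  shows "(LBINT s:{a..b}. x s) = (\<integral>s. indicator {a<..b} s * x_meas s \<partial>lborel)"
proof -
  have "(LBINT s:{a..b}. x s) = (LBINT s:{a..b}. x_meas s)"
    using assms by (intro set_lebesgue_integral_cong) (auto simp: x_meas_eq)
  also have "\<dots> = (LBINT s:{a<..b}. x_meas s)"
    by (rule lborel_set_integral_Icc_Ioc) simp
  finally show ?thesis by (simp add: set_lebesgue_integral_def)
qed

lemma integrable_x_Icc:
  assumes "-r \<le> a"
  shows "integrable lborel (\<lambda>s. indicator {a..b} s * x s)"
proof -
  obtain K where K: "0 \<le> K" "\<And>s. s \<le> b \<Longrightarrow> \<bar>x_meas s\<bar> \<le> K" "\<And>s. s \<le> b \<Longrightarrow> \<bar>x_left_meas s\<bar> \<le> K"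
    using path_bounded[of b] by blast
  have "integrable lborel (\<lambda>s. indicator {a..b} s * x_meas s)"
    by (rule integrable_bounded_finite_support[OF sets_lborel _ _ emeasure_lborel_Icc_finite, where C=K])
       (use K in \<open>auto simp: indicator_def\<close>)
  moreover have "indicator {a..b} s * x_meas s = indicator {a..b} s * x s" for s
    using assms by (auto simp: indicator_def x_meas_eq)
  ultimately show ?thesis by simp
qed

lemma drift_integral:
  assumes "0 \<le> t"
  shows "(LBINT s:{0..t}. e - cm * x s) = e * t - cm * (LBINT s:{0..t}. x s)"
    and "integrable lborel (\<lambda>s. indicator {0..t} s * (e - cm * x s))"
proof -
  have x: "integrable lborel (\<lambda>s. indicator {0..t} s * x s)"
    using r_ge by (intro integrable_x_Icc) simp
  have "indicator {0..t} s * (e - cm * x s) = e * indicator {0..t} s - cm * (indicator {0..t} s * x s)" for s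
    by (simp add: algebra_simps)
  moreover have "integrable lborel (\<lambda>s. e * indicator {0..t} s - cm * (indicator {0..t} s * x s))"
    using x emeasure_lborel_Icc_finite[of 0 t] by simp
  ultimately show "integrable lborel (\<lambda>s. indicator {0..t} s * (e - cm * x s))" by simp
  show "(LBINT s:{0..t}. e - cm * x s) = e * t - cm * (LBINT s:{0..t}. x s)"
    using x emeasure_lborel_Icc_finite[of 0 t] assms
    by (simp add: set_lebesgue_integral_def \<open>\<And>s. indicator {0..t} s * (e - cm * x s) = _\<close>)
qed

lemma volterra_equation:
  assumes "0 \<le> t"
  shows "x t = x 0 + (LBINT s:{0..t}. e - cm * x s) + cn * (LINT s:{0<..t}|N. lim_left x s)
      + ((LBINT s:{-p..t}. Fker fm p t s * x s) + (LINT s:{-q<..t}|N. Fker fn q t s * lim_left x s))"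
  using equation_unfolded[OF assms] drift_integral(1)[OF assms] mu_term_eq_Fker nu_term_eq_Fker by simp

lemma functional_differential_equation:
  assumes t: "0 \<le> t"
  shows "x t = x 0 + (LBINT s:{0..t}. e - cm * x s + ((LBINT u:{-p..0}. fm u * x (s + u))
                      + (LINT w:{s-q<..s}|N. fn (w - s) * lim_left x w)))
               + cn * (LINT s:{0<..t}|N. lim_left x s)"
proof -
  let ?A = "\<lambda>v. (LBINT u:{-p..0}. fm u * x (v + u))"
  let ?B = "\<lambda>v. (LINT w:{v-q<..v}|N. fn (w - v) * lim_left x w)"
  have "(LBINT s:{0..t}. e - cm * x s + (?A s + ?B s))
      = (\<integral>s. indicator {0..t} s * (e - cm * x s) + (indicator {0..t} s * ?A s + indicator {0..t} s * ?B s) \<partial>lborel)"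
    unfolding set_lebesgue_integral_def by (intro Bochner_Integration.integral_cong) (simp_all add: algebra_simps)
  also have "\<dots> = (LBINT s:{0..t}. e - cm * x s) + ((LBINT s:{0..t}. ?A s) + (LBINT s:{0..t}. ?B s))"
    using drift_integral(2)[OF t] mu_lag_integral_eq_Fker(2)[OF t] nu_lag_integral_eq_Fker(2)[OF t]
    by (simp add: set_lebesgue_integral_def)
  finally show ?thesis
    using equation_unfolded[OF t] drift_integral(1)[OF t] mu_lag_integral_eq_Fker(1)[OF t]
      mu_term_eq_Fker_meas nu_lag_integral_eq_Fker(1)[OF t] nu_term_eq_Fker
    by simp
qed

lemma equation_kernel_form:
  assumes "0 \<le> t"
  shows "x t = x 0 + e * t + (- cm) * (\<integral>\<sigma>. indicator {0<..t} \<sigma> * x_meas \<sigma> \<partial>lborel)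
     + (\<integral>\<sigma>. (indicator {-p<..t} \<sigma> * Fker fm p t \<sigma>) * x_meas \<sigma> \<partial>lborel)
     + (\<integral>\<sigma>. (indicator {-q<..t} \<sigma> * Fker fn q t \<sigma>) * x_left_meas \<sigma> \<partial>N)
     + cn * (\<integral>\<sigma>. indicator {0<..t} \<sigma> * x_left_meas \<sigma> \<partial>N)"
proof -
  have "(LINT s:{-q<..t}|N. Fker fn q t s * lim_left x s)
      = (\<integral>\<sigma>. (indicator {-q<..t} \<sigma> * Fker fn q t \<sigma>) * x_left_meas \<sigma> \<partial>N)"
    unfolding set_lebesgue_integral_def using r_ge
    by (intro Bochner_Integration.integral_cong) (auto simp: indicator_def x_left_meas_eq)
  moreover have "(LINT s:{0<..t}|N. lim_left x s) = (\<integral>\<sigma>. indicator {0<..t} \<sigma> * x_left_meas \<sigma> \<partial>N)"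
    unfolding set_lebesgue_integral_def using r_ge
    by (intro Bochner_Integration.integral_cong) (auto simp: indicator_def x_left_meas_eq)
  moreover have "(LBINT s:{-p<..t}. Fker fm p t s * x_meas s)
      = (\<integral>\<sigma>. (indicator {-p<..t} \<sigma> * Fker fm p t \<sigma>) * x_meas \<sigma> \<partial>lborel)"
    by (simp add: set_lebesgue_integral_def mult.assoc)
  ultimately show ?thesis
    using equation_unfolded[OF assms] set_integral_x_eq_x_meas[of 0 t] mu_term_eq_Fker_meas nu_term_eq_Fker r_ge
    by simp
qed

lemma bounded_variation:
  assumes T: "0 \<le> T"
  shows "bounded_variation_on x 0 T"
proof -
  obtain Cm where Cm: "\<And>u. \<bar>fm u\<bar> \<le> Cm" using fm_bounded by blast
  obtain Cn where Cn: "\<And>u. \<bar>fn u\<bar> \<le> Cn" using fn_bounded by blast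
  obtain K where K: "0 \<le> K" "\<And>s. s \<le> T \<Longrightarrow> \<bar>x_meas s\<bar> \<le> K" "\<And>s. s \<le> T \<Longrightarrow> \<bar>x_left_meas s\<bar> \<le> K"
    using path_bounded[of T] by blast
  have drift: "bounded_variation_on (\<lambda>t. x 0 + e * t) 0 T"
    using T by (intro bounded_variation_on_add bounded_variation_on_cmult bounded_variation_on_mono)
      (auto simp: monotone_on_def)
  have lebesgue: "bounded_variation_on (\<lambda>t. \<integral>\<sigma>. indicator {0<..t} \<sigma> * x_meas \<sigma> \<partial>lborel) 0 T"
    by (rule bounded_variation_on_Ioc_integral[OF sets_lborel emeasure_lborel_Ioc_finite T x_meas_measurable K(2)])
  have mu: "bounded_variation_on (\<lambda>t. \<integral>\<sigma>. (indicator {-p<..t} \<sigma> * Fker fm p t \<sigma>) * x_meas \<sigma> \<partial>lborel) 0 T"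
    by (rule bounded_variation_on_Fker_integral[OF sets_lborel emeasure_lborel_Ioc_finite fm_measurable Cm
          fm_nonneg pq(1) T x_meas_measurable K(2)])
  have nu: "bounded_variation_on (\<lambda>t. \<integral>\<sigma>. (indicator {-q<..t} \<sigma> * Fker fn q t \<sigma>) * x_left_meas \<sigma> \<partial>N) 0 T"
    by (rule bounded_variation_on_Fker_integral[OF N_sets N_Ioc_finite fn_measurable Cn
          fn_nonneg pq(2) T x_left_meas_measurable K(3)])
  have stieltjes: "bounded_variation_on (\<lambda>t. \<integral>\<sigma>. indicator {0<..t} \<sigma> * x_left_meas \<sigma> \<partial>N) 0 T"
    by (rule bounded_variation_on_Ioc_integral[OF N_sets N_Ioc_finite T x_left_meas_measurable K(3)])
  have "bounded_variation_on (\<lambda>t. x 0 + e * t + (- cm) * (\<integral>\<sigma>. indicator {0<..t} \<sigma> * x_meas \<sigma> \<partial>lborel)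
     + (\<integral>\<sigma>. (indicator {-p<..t} \<sigma> * Fker fm p t \<sigma>) * x_meas \<sigma> \<partial>lborel)
     + (\<integral>\<sigma>. (indicator {-q<..t} \<sigma> * Fker fn q t \<sigma>) * x_left_meas \<sigma> \<partial>N)
     + cn * (\<integral>\<sigma>. indicator {0<..t} \<sigma> * x_left_meas \<sigma> \<partial>N)) 0 T"
    by (intro bounded_variation_on_add[OF _ bounded_variation_on_cmult[OF stieltjes]]
        bounded_variation_on_add[OF _ nu] bounded_variation_on_add[OF _ mu]
        bounded_variation_on_add[OF drift bounded_variation_on_cmult[OF lebesgue]])
  then show ?thesis
    by (rule bounded_variation_on_cong[rotated]) (rule equation_kernel_form, simp)
qed

end

section \<open>The variance process\<close>

lemma cadlag_from_diff_const:
  assumes "cadlag_from a f"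
  shows "cadlag_from a (\<lambda>t. f t - c)"
  unfolding cadlag_from_def
proof (intro conjI allI impI)
  fix t assume "a \<le> t"
  then show "continuous (at_right t) (\<lambda>t. f t - c)"
    using assms by (intro continuous_diff continuous_const) (simp add: cadlag_from_def)
next
  fix t assume "a < t"
  then obtain l where "(f \<longlongrightarrow> l) (at_left t)" using assms unfolding cadlag_from_def by blast
  then have "((\<lambda>t. f t - c) \<longlongrightarrow> l - c) (at_left t)" by (intro tendsto_diff tendsto_const)
  then show "\<exists>l. ((\<lambda>t. f t - c) \<longlongrightarrow> l) (at_left t)" ..
qed

lemma local_martingale_from_zero: "local_martingale_from M F a (\<lambda>t \<omega>. 0)"
  unfolding local_martingale_from_def
proof (intro conjI exI[of _ "\<lambda>n \<omega>. \<infinity>"])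
  show "adapted F a (\<lambda>t \<omega>. 0)" by (simp add: adapted_def)
  show "\<forall>\<omega>\<in>space M. cadlag_from a (\<lambda>t. 0)"
    by (auto simp: cadlag_from_def intro!: exI[of _ 0])
  show "\<forall>n. stopping_time_from F a (space M) (\<lambda>\<omega>. \<infinity>)" by (simp add: stopping_time_from_def)
  show "\<forall>n. martingale_from M F a (\<lambda>t \<omega>. 0)" by (simp add: martingale_from_def adapted_def)
qed simp_all

lemma adapted_increments:
  assumes filt: "filtration_usual M a F" and X: "adapted F a X" and ab: "a \<le> b"
  shows "adapted F b (\<lambda>t \<omega>. X t \<omega> - X b \<omega>)"
  unfolding adapted_def
proof (intro allI impI borel_measurable_diff)
  fix t assume "b \<le> t"
  then have at: "a \<le> t" using ab by simp
  show "X t \<in> borel_measurable (F t)" using X at by (simp add: adapted_def)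
  note filt_def = filt[unfolded filtration_usual_def]
  have "\<forall>t\<ge>a. subalgebra M (F t)" "\<forall>s t. a \<le> s \<longrightarrow> s \<le> t \<longrightarrow> sets (F s) \<subseteq> sets (F t)"
    using conjunct1[OF filt_def] conjunct1[OF conjunct2[OF filt_def]] .
  then have "subalgebra M (F b)" "subalgebra M (F t)" "sets (F b) \<subseteq> sets (F t)"
    using ab at \<open>b \<le> t\<close> by simp_all
  then have "subalgebra (F t) (F b)" by (simp add: subalgebra_def)
  moreover have "X b \<in> borel_measurable (F b)" using X ab by (simp add: adapted_def)
  ultimately show "X b \<in> borel_measurable (F t)" by (rule measurable_from_subalg)
qed

lemma semimartingale_from_finite_variation:
  fixes M :: "'a measure" and X :: "real \<Rightarrow> 'a \<Rightarrow> real"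
  assumes filt: "filtration_usual M a F" and X: "adapted F a X"
    and cadlag: "\<forall>\<omega>\<in>space M. cadlag_from a (\<lambda>t. X t \<omega>)" and ab: "a \<le> b"
    and bv: "AE \<omega> in M. \<forall>T\<ge>b. bounded_variation_on (\<lambda>t. X t \<omega>) b T"
  shows "semimartingale_from M F b X"
proof -
  have cadlag_b: "\<forall>\<omega>\<in>space M. cadlag_from b (\<lambda>t. X t \<omega>)"
    using cadlag cadlag_from_mono[OF ab] by blast
  have fv: "fv_process M F b (\<lambda>t \<omega>. X t \<omega> - X b \<omega>)"
    unfolding fv_process_def
  proof (intro conjI adapted_increments[OF filt X ab])
    show "\<forall>\<omega>\<in>space M. cadlag_from b (\<lambda>t. X t \<omega> - X b \<omega>)"
      using cadlag_b by (simp add: cadlag_from_diff_const)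
    show "AE \<omega> in M. \<forall>T\<ge>b. bounded_variation_on (\<lambda>t. X t \<omega> - X b \<omega>) b T"
      using bv by eventually_elim (simp add: bounded_variation_on_def)
  qed
  show ?thesis
    unfolding semimartingale_from_def
  proof (intro conjI exI)
    show "adapted F b X" using X ab by (simp add: adapted_def)
    show "\<forall>\<omega>\<in>space M. cadlag_from b (\<lambda>t. X t \<omega>)" by (rule cadlag_b)
    show "local_martingale_from M F b (\<lambda>t \<omega>. 0)" by (rule local_martingale_from_zero)
    show "fv_process M F b (\<lambda>t \<omega>. X t \<omega> - X b \<omega>)" by (rule fv)
  qed simp_all
qed

lemma strong_solution_AE_cdgarch_path:
  assumes pq: "0 \<le> p" "0 \<le> q" "r = max p q"
    and fmu: "continuous_on {-p..0} f\<^sub>\<mu>" "\<forall>u. f\<^sub>\<mu> u \<ge> 0" "\<forall>u. u \<notin> {-p..0} \<longrightarrow> f\<^sub>\<mu> u = 0"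
    and fnu: "continuous_on {-q..0} f\<^sub>\<nu>" "\<forall>u. f\<^sub>\<nu> u \<ge> 0" "\<forall>u. u \<notin> {-q..0} \<longrightarrow> f\<^sub>\<nu> u = 0"
    and sol: "strong_solution M F r p q \<eta> c\<^sub>\<mu> c\<^sub>\<nu> f\<^sub>\<mu> f\<^sub>\<nu> \<sigma> L \<Phi> X"
  shows "AE \<omega> in M. cdgarch_path p q r \<eta> c\<^sub>\<mu> c\<^sub>\<nu> f\<^sub>\<mu> f\<^sub>\<nu> (dS \<sigma> (-r) (\<lambda>s. L s \<omega>)) (\<lambda>s. \<Phi> s \<omega>) (\<lambda>s. X s \<omega>)"
proof -
  have cadlag: "\<forall>\<omega>\<in>space M. cadlag_from (-r) (\<lambda>t. X t \<omega>)"
    and initial: "\<forall>\<omega>\<in>space M. \<forall>t\<in>{-r..0}. X t \<omega> = \<Phi> t \<omega>"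
    using sol unfolding strong_solution_def by blast+
  have "AE \<omega> in M. \<forall>t>0. cdgarch_eq p q \<eta> c\<^sub>\<mu> c\<^sub>\<nu> f\<^sub>\<mu> f\<^sub>\<nu>
      (dS \<sigma> (-r) (\<lambda>s. L s \<omega>)) (\<lambda>s. \<Phi> s \<omega>) (\<lambda>s. X s \<omega>) t"
    using sol unfolding strong_solution_def by blast
  with AE_space show ?thesis
  proof eventually_elim
    case (elim \<omega>)
    show ?case
    proof
      show "sets (dS \<sigma> (-r) (\<lambda>s. L s \<omega>)) = sets borel" by (simp add: dS_def)
      show "emeasure (dS \<sigma> (-r) (\<lambda>s. L s \<omega>)) {a<..b} < \<infinity>" for a b
        unfolding dS_def by (rule emeasure_interval_measure_Ioc_finite)
      show "cadlag_from (-r) (\<lambda>s. X s \<omega>)" using cadlag elim by blast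
      show "X t \<omega> = \<Phi> t \<omega>" if "t \<in> {-r..0}" for t using initial elim that by blast
      show "cdgarch_eq p q \<eta> c\<^sub>\<mu> c\<^sub>\<nu> f\<^sub>\<mu> f\<^sub>\<nu> (dS \<sigma> (-r) (\<lambda>s. L s \<omega>)) (\<lambda>s. \<Phi> s \<omega>) (\<lambda>s. X s \<omega>) t"
        if "0 < t" for t
        using elim that by blast
    qed (use pq fmu fnu in simp_all)
  qed
qed

theorem theorem4p7:
  fixes M :: "'a measure" and F :: "real \<Rightarrow> 'a measure"
    and L \<Phi> X :: "real \<Rightarrow> 'a \<Rightarrow> real"
    and p q r \<eta> c\<^sub>\<mu> c\<^sub>\<nu> \<sigma>\<^sub>L :: real and \<nu>\<^sub>L :: "real measure"
    and f\<^sub>\<mu> f\<^sub>\<nu> :: "real \<Rightarrow> real"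
  assumes P: "prob_space M"
    and pq: "p \<ge> 0" "q \<ge> 0" and r_def: "r = max p q" and r_pos: "r > 0"
    and filt: "filtration_usual M (-r) F"
    and levy: "levy_process M F (-r) L"
    and cent: "centered_square_integrable M (-r) L"
    and triplet: "levy_khintchine M (-r) L \<sigma>\<^sub>L \<nu>\<^sub>L"
    and fourth: "integrable M (\<lambda>\<omega>. (L (-r + 1) \<omega>) ^ 4)"
    and eta: "\<eta> > 0" and cmu: "c\<^sub>\<mu> > 0" and cnu: "c\<^sub>\<nu> > 0"
    and fmu: "continuous_on {-p..0} f\<^sub>\<mu>" "\<forall>u. f\<^sub>\<mu> u \<ge> 0" "\<forall>u. u \<notin> {-p..0} \<longrightarrow> f\<^sub>\<mu> u = 0"
    and fnu: "continuous_on {-q..0} f\<^sub>\<nu>" "\<forall>u. f\<^sub>\<nu> u \<ge> 0" "\<forall>u. u \<notin> {-q..0} \<longrightarrow> f\<^sub>\<nu> u = 0"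
    and Phi_cadlag: "\<forall>\<omega>\<in>space M. cadlag_on (-r) 0 (\<lambda>t. \<Phi> t \<omega>)"
    and Phi_adapted: "\<forall>t\<in>{-r..0}. \<Phi> t \<in> borel_measurable (natural_filtration M (-r) L t)"
    and Phi_L2: "(\<integral>\<^sup>+\<omega>. (SUP s\<in>{-r..0}. ennreal ((\<Phi> s \<omega>)\<^sup>2)) \<partial>M) < \<infinity>"
    and sol: "strong_solution M F r p q \<eta> c\<^sub>\<mu> c\<^sub>\<nu> f\<^sub>\<mu> f\<^sub>\<nu> \<sigma>\<^sub>L L \<Phi> X"
  shows
    \<comment> \<open>stochastic Volterra integral equation\<close>
    "(AE \<omega> in M. \<forall>t\<ge>0.
        (let x = (\<lambda>s. X s \<omega>); SM = dS \<sigma>\<^sub>L (-r) (\<lambda>s. L s \<omega>) in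
         x t = x 0 + (LBINT s:{0..t}. \<eta> - c\<^sub>\<mu> * x s)
               + c\<^sub>\<nu> * (LINT s:{0<..t}|SM. lim_left x s)
               + ((LBINT s:{-p..t}. Fker f\<^sub>\<mu> p t s * x s)
                  + (LINT s:{-q<..t}|SM. Fker f\<^sub>\<nu> q t s * lim_left x s))))
     \<and>
     \<comment> \<open>stochastic functional differential equation, in integral form\<close>
     (AE \<omega> in M. \<forall>t\<ge>0.
        (let x = (\<lambda>s. X s \<omega>); SM = dS \<sigma>\<^sub>L (-r) (\<lambda>s. L s \<omega>);
             \<xi> = (\<lambda>v. (LBINT u:{-p..0}. f\<^sub>\<mu> u * x (v + u))
                      + (LINT w:{v-q<..v}|SM. f\<^sub>\<nu> (w - v) * lim_left x w)) in
         x t = x 0 + (LBINT s:{0..t}. \<eta> - c\<^sub>\<mu> * x s + \<xi> s)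
               + c\<^sub>\<nu> * (LINT s:{0<..t}|SM. lim_left x s)))
     \<and>
     (\<forall>\<omega>\<in>space M. \<forall>u\<in>{-r..0}. X u \<omega> = \<Phi> u \<omega>)
     \<and> semimartingale_from M F 0 X
     \<and> (AE \<omega> in M. \<forall>T\<ge>0. bounded_variation_on (\<lambda>t. X t \<omega>) 0 T)"
proof -
  have paths: "AE \<omega> in M. cdgarch_path p q r \<eta> c\<^sub>\<mu> c\<^sub>\<nu> f\<^sub>\<mu> f\<^sub>\<nu>
      (dS \<sigma>\<^sub>L (-r) (\<lambda>s. L s \<omega>)) (\<lambda>s. \<Phi> s \<omega>) (\<lambda>s. X s \<omega>)"
    by (rule strong_solution_AE_cdgarch_path[OF pq r_def fmu fnu sol])
  have solution: "adapted F (-r) X" "\<forall>\<omega>\<in>space M. cadlag_from (-r) (\<lambda>t. X t \<omega>)"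
      "\<forall>\<omega>\<in>space M. \<forall>u\<in>{-r..0}. X u \<omega> = \<Phi> u \<omega>"
    using sol unfolding strong_solution_def by blast+
  have bv: "AE \<omega> in M. \<forall>T\<ge>0. bounded_variation_on (\<lambda>t. X t \<omega>) 0 T"
    using paths by eventually_elim (blast dest: cdgarch_path.bounded_variation)
  moreover have "semimartingale_from M F 0 X"
    using r_pos by (intro semimartingale_from_finite_variation[OF filt solution(1,2) _ bv]) simp
  moreover have "AE \<omega> in M. \<forall>t\<ge>0. (let x = (\<lambda>s. X s \<omega>); SM = dS \<sigma>\<^sub>L (-r) (\<lambda>s. L s \<omega>) in
      x t = x 0 + (LBINT s:{0..t}. \<eta> - c\<^sub>\<mu> * x s) + c\<^sub>\<nu> * (LINT s:{0<..t}|SM. lim_left x s)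
        + ((LBINT s:{-p..t}. Fker f\<^sub>\<mu> p t s * x s) + (LINT s:{-q<..t}|SM. Fker f\<^sub>\<nu> q t s * lim_left x s)))"
    using paths by eventually_elim (auto simp: Let_def dest: cdgarch_path.volterra_equation)
  moreover have "AE \<omega> in M. \<forall>t\<ge>0. (let x = (\<lambda>s. X s \<omega>); SM = dS \<sigma>\<^sub>L (-r) (\<lambda>s. L s \<omega>);
      \<xi> = (\<lambda>v. (LBINT u:{-p..0}. f\<^sub>\<mu> u * x (v + u)) + (LINT w:{v-q<..v}|SM. f\<^sub>\<nu> (w - v) * lim_left x w)) in
      x t = x 0 + (LBINT s:{0..t}. \<eta> - c\<^sub>\<mu> * x s + \<xi> s) + c\<^sub>\<nu> * (LINT s:{0<..t}|SM. lim_left x s))"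
    using paths by eventually_elim (auto simp: Let_def dest: cdgarch_path.functional_differential_equation)
  ultimately show ?thesis using solution(3) by blast
qed

end
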